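(* Suppose the network connectivity assumption and the Poincaré scaling assumption hold, and that for the given $H\in\mathcal H$ and $\ell\in\mathbb N$ the family $\{g_{T,\ell}:T\in\mathcal T_H\}$ satisfies the Riesz stability assumption with constant $C_{\mathrm r}(H,\ell)$. Then there exist constants $C,C'>0$, independent of $H$, $\ell$ and $f$ (depending only on $d,\alpha,\beta,\mu,C_{\mathrm{fr}}$, where $C_{\mathrm{fr}}$ is a constant with $|v|_M\le C_{\mathrm{fr}}|v|_L$ for all $v\in V$), such that for all $f\in\hat V$, with $u=\mathcal K^{-1}f$ and $u_{H,\ell}$ the SLOD approximation, $$|u-u_{H,\ell}|_L\le C\big(H|f-\Pi_Hf|_M+C_{\mathrm r}^{1/2}(H,\ell)\,\ell^{d/2}\,\sigma(H,\ell)\,|f|_M\big)\le C'\big(H^2|f|_L+C_{\mathrm r}^{1/2}(H,\ell)\,\ell^{d/2}\,\sigma(H,\ell)\,|f|_M\big).$$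
   Context: Let $d\in\mathbb N$, $\Omega=[0,1]^d$, and let $\mathcal G=(\mathcal N,\mathcal E)$ be a finite connected graph with at least two nodes, whose nodes $\mathcal N$ are distinct points of $\Omega$. Write $x\sim y$ if $\{x,y\}\in\mathcal E$, and $|x-y|$ for the Euclidean distance. For $\omega\subset\Omega$ let $\mathcal N(\omega)=\mathcal N\cap\omega$. Let $\Gamma\subset\partial\Omega$ with $\mathcal N(\Gamma)\neq\emptyset$. $\hat V$ is the space of real functions on $\mathcal N$ with $(u,v)=\sum_xu(x)v(x)$; $V=\{v\in\hat V:v=0\text{ on }\mathcal N(\Gamma)\}$; $\hat V_\omega,V_\omega$ are the functions in $\hat V$, resp. $V$, vanishing outside $\mathcal N(\omega)$; $\tilde V_\omega$ is the subspace of $V$ of functions vanishing at every node that is neither in $\mathcal N(\omega)$ nor adjacent to a node of $\mathcal N(\omega)$. Symmetric operators: $(M_xv,w)=\tfrac12\sum_{y\sim x}|x-y|v(x)w(x)$, $(L_xv,w)=\tfrac12\sum_{y\sim x}\frac{(v(x)-v(y))(w(x)-w(y))}{|x-y|}$, $(K_xv,w)=\tfrac12\sum_{y\sim x}\gamma_{xy}\frac{(v(x)-v(y))(w(x)-w(y))}{|x-y|}$ with $\gamma_{xy}=\gamma_{yx}\in[\alpha,\beta]$, $0<\alpha\le\beta<\infty$; $M,L,K$ are sums over all $x\in\mathcal N$, $M_\omega,L_\omega,K_\omega$ sums over $x\in\mathcal N(\omega)$. Seminorms $|v|_M^2=(Mv,v)$, $|v|_L^2=(Lv,v)$, $|v|_{M,\omega}^2=(M_\omega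 v,v)$, $|v|_{L,\omega}^2=(L_\omega v,v)$, $|v|_{V,\omega}^2=|v|_{M,\omega}^2+|v|_{L,\omega}^2$. $\mathcal K^{-1}:\hat V\to V$ maps $f$ to the unique $u\in V$ with $(Ku,v)=(Mf,v)$ $\forall v\in V$; $\mathcal K_\omega^{-1}:\hat V_\omega\to V_\omega$ maps $g$ to the unique $\varphi\in V_\omega$ with $(K_\omega\varphi,v)=(M_\omega g,v)$ $\forall v\in V_\omega$. Mesh: for $H>0$ with $1/H\in\mathbb N$, $\mathcal T_H$ consists of the cubes $I_1\times\dots\times I_d$, $I_i=[a_i,a_i+H)$, $a_i\in\{0,H,\dots,1-H\}$, except $I_i=[a_i,a_i+H]$ when $a_i+H=1$. $\mathsf N(\omega)$ is the union of all $T\in\mathcal T_H$ with $\overline T\cap\overline\omega\neq\emptyset$; $\mathsf N^1=\mathsf N$, $\mathsf N^\ell(\omega)=\mathsf N(\mathsf N^{\ell-1}(\omega))$. $\mathcal H$ is a finite set of admissible mesh sizes. $\mathbf 1_T$ is the indicator of nodes in $T$; $\mathbb P^0(\mathcal T_H)=\mathrm{span}\{\mathbf 1_T:T\in\mathcal T_H\}$; $\Pi_Hv=\sum_T\frac{(M_Tv,1)}{|1|_{M,T}^2}\mathbf 1_T$ (term $0$ if $T$ has no node). Network connectivity assumption: for every $H\in\mathcal H$, $T\in\mathcal T_H$ there is a connected subgraph of $\mathcal G$ containing all edges with at least one endpoint in $T$ and only edges with both endpoints in $\mathsf N(T)$. Poincaré scaling assumption: there is $\mu>0$ such that for all $H\in\mathcal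 H$, $T\in\mathcal T_H$, $v\in\hat V$ there is $c\in\mathbb R$ with $|v-c|_{M,T}\le\mu H|v|_{L,\mathsf N(T)}$. SLOD construction: fix $H\in\mathcal H$, $\ell\in\mathbb N$. For $T\in\mathcal T_H$ let $\omega=\mathsf N^\ell(T)$ and $\mathbb P^0(\mathcal T_{H,\omega})=\mathrm{span}\{\mathbf 1_{T'}:T'\in\mathcal T_H,\ T'\subset\omega\}$. For $q\in\mathbb P^0(\mathcal T_{H,\omega})$, let $\varphi_q=\mathcal K_\omega^{-1}q$, let $B_\omega\varphi_q$ be the functional $v\mapsto(K\varphi_q,v)-(Mq,v)$ on $\tilde V_\omega$, and let $\mathcal Rq\in\tilde V_\omega$ be the unique solution of $((L_\omega+M_\omega)\mathcal Rq,v)=(B_\omega\varphi_q,v)$ for all $v\in\tilde V_\omega$. Let $g_{T,\ell}$ be a minimizer of $q\mapsto|\mathcal Rq|_{V,\omega}^2/|q|_{M,\omega}^2$ over $q\in\mathbb P^0(\mathcal T_{H,\omega})$ with $|q|_{M,\omega}\ne 0$, normalized by $|g_{T,\ell}|_{M,\omega}=1$; set $\varphi_{T,\ell}=\mathcal K_\omega^{-1}g_{T,\ell}$, $\sigma_T(H,\ell)=|\mathcal Rg_{T,\ell}|_{V,\omega}$, and $\sigma(H,\ell)=\max_{T\in\mathcal T_H}\sigma_T(H,\ell)$. Let $V_{H,\ell}=\mathrm{span}\{\varphi_{T,\ell}:T\in\mathcal T_H\}$; the SLOD approximation $u_{H,\ell}\in V_{H,\ell}$ satisfies $(Ku_{H,\ell},v)=(Mf,v)$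 for all $v\in V_{H,\ell}$. Riesz stability assumption: there is $C_{\mathrm r}(H,\ell)>0$ such that for all real coefficients $(c_T)_{T\in\mathcal T_H}$, $C_{\mathrm r}^{-1}\sum_Tc_T^2\le|\sum_Tc_Tg_{T,\ell}|_M^2\le C_{\mathrm r}\sum_Tc_T^2$. *)

theory Defs
  imports "HOL-Analysis.Analysis"
begin

text \<open>Nodes are points of real^'n (so d = CARD('n)); E is the (symmetric) adjacency relation.
Grid functions are real-valued functions on points; only their values on the node set Nd matter.\<close>

definition Omega :: "(real^'n) set" where
  "Omega = {x. \<forall>i. 0 \<le> x$i \<and> x$i \<le> 1}"

definition network :: "(real^'n) set \<Rightarrow> (real^'n \<Rightarrow> real^'n \<Rightarrow> bool) \<Rightarrow> bool" where
  "network Nd E \<longleftrightarrow> finite Nd \<and> Nd \<subseteq> Omega \<and> card Nd \<ge> 2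
     \<and> (\<forall>x y. E x y \<longrightarrow> x \<in> Nd \<and> y \<in> Nd \<and> x \<noteq> y \<and> E y x)
     \<and> (\<forall>x\<in>Nd. \<forall>y\<in>Nd. E\<^sup>*\<^sup>* x y)"

text \<open>(M_omega v, w), (L_omega v, w), (K_omega v, w): sums over nodes x in omega of the local forms.
Use omega = UNIV for M, L, K.\<close>

definition Mform :: "('a::metric_space \<Rightarrow> 'a \<Rightarrow> bool) \<Rightarrow> 'a set \<Rightarrow> 'a set
    \<Rightarrow> ('a \<Rightarrow> real) \<Rightarrow> ('a \<Rightarrow> real) \<Rightarrow> real" where
  "Mform E Nd \<omega> v w = (\<Sum>x\<in>Nd \<inter> \<omega>. (1/2) * (\<Sum>y\<in>{y. E x y}. dist x y * v x * w x))"

definition Lform :: "('a::metric_space \<Rightarrow> 'a \<Rightarrow> bool) \<Rightarrow> 'a set \<Rightarrow> 'a set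
    \<Rightarrow> ('a \<Rightarrow> real) \<Rightarrow> ('a \<Rightarrow> real) \<Rightarrow> real" where
  "Lform E Nd \<omega> v w = (\<Sum>x\<in>Nd \<inter> \<omega>. (1/2) *
      (\<Sum>y\<in>{y. E x y}. (v x - v y) * (w x - w y) / dist x y))"

definition Kform :: "('a \<Rightarrow> 'a \<Rightarrow> real) \<Rightarrow> ('a::metric_space \<Rightarrow> 'a \<Rightarrow> bool) \<Rightarrow> 'a set \<Rightarrow> 'a set
    \<Rightarrow> ('a \<Rightarrow> real) \<Rightarrow> ('a \<Rightarrow> real) \<Rightarrow> real" where
  "Kform \<gamma> E Nd \<omega> v w = (\<Sum>x\<in>Nd \<inter> \<omega>. (1/2) *
      (\<Sum>y\<in>{y. E x y}. \<gamma> x y * (v x - v y) * (w x - w y) / dist x y))"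

definition semi :: "(('a \<Rightarrow> real) \<Rightarrow> ('a \<Rightarrow> real) \<Rightarrow> real) \<Rightarrow> ('a \<Rightarrow> real) \<Rightarrow> real" where
  "semi F v = sqrt (F v v)"

definition Vnorm :: "('a::metric_space \<Rightarrow> 'a \<Rightarrow> bool) \<Rightarrow> 'a set \<Rightarrow> 'a set \<Rightarrow> ('a \<Rightarrow> real) \<Rightarrow> real" where
  "Vnorm E Nd \<omega> v = sqrt (Mform E Nd \<omega> v v + Lform E Nd \<omega> v v)"

definition hatV :: "'a set \<Rightarrow> ('a \<Rightarrow> real) set" where
  "hatV Nd = {v. \<forall>x. x \<notin> Nd \<longrightarrow> v x = 0}"

definition Vsp :: "'a set \<Rightarrow> 'a set \<Rightarrow> ('a \<Rightarrow> real) set" where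
  "Vsp Nd \<Gamma> = {v \<in> hatV Nd. \<forall>x\<in>Nd \<inter> \<Gamma>. v x = 0}"

definition Vloc :: "'a set \<Rightarrow> 'a set \<Rightarrow> 'a set \<Rightarrow> ('a \<Rightarrow> real) set" where
  "Vloc Nd \<Gamma> \<omega> = {v \<in> Vsp Nd \<Gamma>. \<forall>x\<in>Nd. x \<notin> \<omega> \<longrightarrow> v x = 0}"

definition Vtilde :: "('a \<Rightarrow> 'a \<Rightarrow> bool) \<Rightarrow> 'a set \<Rightarrow> 'a set \<Rightarrow> 'a set \<Rightarrow> ('a \<Rightarrow> real) set" where
  "Vtilde E Nd \<Gamma> \<omega> = {v \<in> Vsp Nd \<Gamma>.
      \<forall>x\<in>Nd. (x \<notin> \<omega> \<and> \<not> (\<exists>y\<in>Nd \<inter> \<omega>. E x y)) \<longrightarrow> v x = 0}"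

definition Kinv :: "('a \<Rightarrow> 'a \<Rightarrow> real) \<Rightarrow> ('a::metric_space \<Rightarrow> 'a \<Rightarrow> bool) \<Rightarrow> 'a set \<Rightarrow> 'a set
    \<Rightarrow> ('a \<Rightarrow> real) \<Rightarrow> ('a \<Rightarrow> real)" where
  "Kinv \<gamma> E Nd \<Gamma> f = (THE u. u \<in> Vsp Nd \<Gamma> \<and>
      (\<forall>v\<in>Vsp Nd \<Gamma>. Kform \<gamma> E Nd UNIV u v = Mform E Nd UNIV f v))"

definition Kinv_loc :: "('a \<Rightarrow> 'a \<Rightarrow> real) \<Rightarrow> ('a::metric_space \<Rightarrow> 'a \<Rightarrow> bool) \<Rightarrow> 'a set \<Rightarrow> 'a set
    \<Rightarrow> 'a set \<Rightarrow> ('a \<Rightarrow> real) \<Rightarrow> ('a \<Rightarrow> real)" where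
  "Kinv_loc \<gamma> E Nd \<Gamma> \<omega> g = (THE \<phi>. \<phi> \<in> Vloc Nd \<Gamma> \<omega> \<and>
      (\<forall>v\<in>Vloc Nd \<Gamma> \<omega>. Kform \<gamma> E Nd \<omega> \<phi> v = Mform E Nd \<omega> g v))"

text \<open>R q: the unique element of tilde V_omega with ((L_omega + M_omega) R q, v) = (B_omega phi_q, v)
  for all v in tilde V_omega, where phi_q = K_omega^{-1} q and (B_omega phi_q, v) = (K phi_q, v) - (M q, v).\<close>
definition Rop :: "('a \<Rightarrow> 'a \<Rightarrow> real) \<Rightarrow> ('a::metric_space \<Rightarrow> 'a \<Rightarrow> bool) \<Rightarrow> 'a set \<Rightarrow> 'a set
    \<Rightarrow> 'a set \<Rightarrow> ('a \<Rightarrow> real) \<Rightarrow> ('a \<Rightarrow> real)" where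
  "Rop \<gamma> E Nd \<Gamma> \<omega> q = (THE r. r \<in> Vtilde E Nd \<Gamma> \<omega> \<and>
      (\<forall>v\<in>Vtilde E Nd \<Gamma> \<omega>. Lform E Nd \<omega> r v + Mform E Nd \<omega> r v
         = Kform \<gamma> E Nd UNIV (Kinv_loc \<gamma> E Nd \<Gamma> \<omega> q) v - Mform E Nd UNIV q v))"

definition cube :: "real \<Rightarrow> ('n \<Rightarrow> nat) \<Rightarrow> (real^'n) set" where
  "cube H a = {x. \<forall>i. real (a i) * H \<le> x$i \<and>
      (x$i < real (a i + 1) * H \<or> (real (a i + 1) * H = 1 \<and> x$i \<le> 1))}"

definition mesh :: "real \<Rightarrow> (real^'n) set set" where
  "mesh H = {cube H a | a. \<forall>i. real (a i + 1) * H \<le> 1}"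

definition patch :: "real \<Rightarrow> (real^'n) set \<Rightarrow> (real^'n) set" where
  "patch H \<omega> = \<Union>{T \<in> mesh H. closure T \<inter> closure \<omega> \<noteq> {}}"

definition patchn :: "real \<Rightarrow> nat \<Rightarrow> (real^'n) set \<Rightarrow> (real^'n) set" where
  "patchn H l \<omega> = (patch H ^^ l) \<omega>"

definition ind :: "'a set \<Rightarrow> 'a set \<Rightarrow> 'a \<Rightarrow> real" where
  "ind Nd T x = (if x \<in> Nd \<and> x \<in> T then 1 else 0)"

definition P0 :: "(real^'n) set \<Rightarrow> real \<Rightarrow> (real^'n) set \<Rightarrow> (real^'n \<Rightarrow> real) set" where
  "P0 Nd H \<omega> = {q. \<exists>c. q = (\<lambda>x. \<Sum>T\<in>{T \<in> mesh H. T \<subseteq> \<omega>}. c T * ind Nd T x)}"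

text \<open>Pi_H v = sum_T (M_T v, 1)/|1|_{M,T}^2 1_T (term 0 if denominator vanishes, as x/0 = 0)\<close>
definition PiH :: "(real^'n \<Rightarrow> real^'n \<Rightarrow> bool) \<Rightarrow> (real^'n) set \<Rightarrow> real
    \<Rightarrow> (real^'n \<Rightarrow> real) \<Rightarrow> (real^'n \<Rightarrow> real)" where
  "PiH E Nd H v = (\<lambda>x. \<Sum>T\<in>mesh H.
      (Mform E Nd T v (\<lambda>_. 1) / (semi (Mform E Nd T) (\<lambda>_. 1))^2) * ind Nd T x)"

text \<open>Network connectivity assumption; a subgraph is given by a symmetric set S of (directed copies of) edges,
  connected meaning any two of its vertices are joined by a path in S.\<close>
definition connectivity_assm :: "(real^'n) set \<Rightarrow> (real^'n \<Rightarrow> real^'n \<Rightarrow> bool) \<Rightarrow> real set \<Rightarrow> bool" where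
  "connectivity_assm Nd E Hs \<longleftrightarrow> (\<forall>H\<in>Hs. \<forall>T\<in>mesh H. \<exists>S.
      S \<subseteq> {(x, y). E x y} \<and> sym S \<and> (\<forall>a\<in>Field S. \<forall>b\<in>Field S. (a, b) \<in> S\<^sup>*)
      \<and> (\<forall>x y. E x y \<and> (x \<in> T \<or> y \<in> T) \<longrightarrow> (x, y) \<in> S)
      \<and> (\<forall>(x, y)\<in>S. x \<in> patch H T \<and> y \<in> patch H T))"

definition poincare_assm :: "(real^'n) set \<Rightarrow> (real^'n \<Rightarrow> real^'n \<Rightarrow> bool) \<Rightarrow> real set \<Rightarrow> real \<Rightarrow> bool" where
  "poincare_assm Nd E Hs \<mu> \<longleftrightarrow> \<mu> > 0 \<and> (\<forall>H\<in>Hs. \<forall>T\<in>mesh H. \<forall>v \<in> hatV Nd. \<exists>c::real.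
      semi (Mform E Nd T) (\<lambda>x. v x - c) \<le> \<mu> * H * semi (Lform E Nd (patch H T)) v)"

definition slod_min :: "(real^'n \<Rightarrow> real^'n \<Rightarrow> real) \<Rightarrow> (real^'n \<Rightarrow> real^'n \<Rightarrow> bool) \<Rightarrow> (real^'n) set
    \<Rightarrow> (real^'n) set \<Rightarrow> real \<Rightarrow> nat \<Rightarrow> (real^'n) set \<Rightarrow> (real^'n \<Rightarrow> real) \<Rightarrow> bool" where
  "slod_min \<gamma> E Nd \<Gamma> H l T g \<longleftrightarrow> (let \<omega> = patchn H l T in
     g \<in> P0 Nd H \<omega> \<and> semi (Mform E Nd \<omega>) g = 1 \<and>
     (\<forall>q\<in>P0 Nd H \<omega>. semi (Mform E Nd \<omega>) q \<noteq> 0 \<longrightarrow>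
        (Vnorm E Nd \<omega> (Rop \<gamma> E Nd \<Gamma> \<omega> g))^2 / (semi (Mform E Nd \<omega>) g)^2
          \<le> (Vnorm E Nd \<omega> (Rop \<gamma> E Nd \<Gamma> \<omega> q))^2 / (semi (Mform E Nd \<omega>) q)^2))"

definition sigma :: "(real^'n \<Rightarrow> real^'n \<Rightarrow> real) \<Rightarrow> (real^'n \<Rightarrow> real^'n \<Rightarrow> bool) \<Rightarrow> (real^'n) set
    \<Rightarrow> (real^'n) set \<Rightarrow> real \<Rightarrow> nat \<Rightarrow> ((real^'n) set \<Rightarrow> real^'n \<Rightarrow> real) \<Rightarrow> real" where
  "sigma \<gamma> E Nd \<Gamma> H l g = Max ((\<lambda>T. Vnorm E Nd (patchn H l T)
      (Rop \<gamma> E Nd \<Gamma> (patchn H l T) (g T))) ` mesh H)"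

definition VHl :: "(real^'n \<Rightarrow> real^'n \<Rightarrow> real) \<Rightarrow> (real^'n \<Rightarrow> real^'n \<Rightarrow> bool) \<Rightarrow> (real^'n) set
    \<Rightarrow> (real^'n) set \<Rightarrow> real \<Rightarrow> nat \<Rightarrow> ((real^'n) set \<Rightarrow> real^'n \<Rightarrow> real) \<Rightarrow> (real^'n \<Rightarrow> real) set" where
  "VHl \<gamma> E Nd \<Gamma> H l g = {v. \<exists>c. v = (\<lambda>x. \<Sum>T\<in>mesh H.
      c T * Kinv_loc \<gamma> E Nd \<Gamma> (patchn H l T) (g T) x)}"

definition riesz_assm :: "(real^'n \<Rightarrow> real^'n \<Rightarrow> bool) \<Rightarrow> (real^'n) set \<Rightarrow> real
    \<Rightarrow> real \<Rightarrow> ((real^'n) set \<Rightarrow> real^'n \<Rightarrow> real) \<Rightarrow> bool" where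
  "riesz_assm E Nd H Cr g \<longleftrightarrow> Cr > 0 \<and> (\<forall>c. 
      (1 / Cr) * (\<Sum>T\<in>mesh H. (c T)^2) \<le> (semi (Mform E Nd UNIV) (\<lambda>x. \<Sum>T\<in>mesh H. c T * g T x))^2
    \<and> (semi (Mform E Nd UNIV) (\<lambda>x. \<Sum>T\<in>mesh H. c T * g T x))^2 \<le> Cr * (\<Sum>T\<in>mesh H. (c T)^2))"

end

theory Submission
  imports Defs
begin

text \<open>By C\'ea's lemma the SLOD error is controlled by the error of any element of V_{H,l}.
  We compare with \<Sum>_T c_T \<phi>_{T,l}, where c are the coefficients of \<Pi>_H f in the basis
  g_{T,l}: they exist and satisfy \<Sum>_T c_T^2 \<le> C_r |f|_M^2 by Riesz stability. Testing the
  equation of w = u - \<Sum>_T c_T \<phi>_{T,l} with w leaves two terms. The projection error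
  (f - \<Pi>_H f, w)_M is bounded by the Poincar\'e inequality on the patches, since f - \<Pi>_H f is
  orthogonal to the constants on every cell. The localisation defects B_\<omega> \<phi>_{T,l} are
  represented by R g_{T,l}, hence bounded by \<sigma> |w|_{V,N^l(T)}, and summed with Cauchy--Schwarz
  and the overlap (2l+1)^d \<le> 3^d l^d of the patches. The second inequality is the Poincar\'e
  estimate |f - \<Pi>_H f|_M \<le> \<mu> H 3^{d/2} |f|_L.\<close>

section \<open>Square linear systems\<close>

definition pivot_reduce :: "('r \<Rightarrow> 'c \<Rightarrow> real) \<Rightarrow> 'r \<Rightarrow> 'c \<Rightarrow> 'r \<Rightarrow> 'c \<Rightarrow> real" where
  "pivot_reduce A x z u y = A u y - A u z * A x y / A x z"

lemma pivot_reduce_pivot_row [simp]: "A x z \<noteq> 0 \<Longrightarrow> pivot_reduce A x z x y = 0"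
  by (simp add: pivot_reduce_def)

lemma pivot_lift:
  fixes A :: "'r \<Rightarrow> 'c \<Rightarrow> real"
  assumes "finite C" "z \<in> C" "A x z \<noteq> 0"
  shows "(\<Sum>y\<in>C. A u y * (c(z := (b - (\<Sum>y\<in>C - {z}. A x y * c y)) / A x z)) y)
       = (\<Sum>y\<in>C - {z}. pivot_reduce A x z u y * c y) + A u z / A x z * b"
proof -
  let ?c = "c(z := (b - (\<Sum>y\<in>C - {z}. A x y * c y)) / A x z)"
  have "(\<Sum>y\<in>C. A u y * ?c y) = A u z * ?c z + (\<Sum>y\<in>C - {z}. A u y * ?c y)"
    using assms(1,2) by (rule sum.remove)
  also have "(\<Sum>y\<in>C - {z}. A u y * ?c y) = (\<Sum>y\<in>C - {z}. A u y * c y)"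
    by (rule sum.cong) auto
  moreover have "(\<Sum>y\<in>C - {z}. pivot_reduce A x z u y * c y)
      = (\<Sum>y\<in>C - {z}. A u y * c y) - A u z / A x z * (\<Sum>y\<in>C - {z}. A x y * c y)"
    by (simp add: pivot_reduce_def algebra_simps sum_subtractf sum_distrib_left)
  ultimately show ?thesis
    using assms(3) by (simp add: field_simps)
qed

lemma column_has_nonzero_entry:
  fixes A :: "'r \<Rightarrow> 'c \<Rightarrow> real"
  assumes "finite C" "z \<in> C"
    and kernel: "\<forall>c. (\<forall>x\<in>R. (\<Sum>y\<in>C. A x y * c y) = 0) \<longrightarrow> (\<forall>y\<in>C. c y = 0)"
  shows "\<exists>x\<in>R. A x z \<noteq> 0"
proof (rule ccontr)
  assume "\<not> ?thesis"
  then have "\<forall>x\<in>R. (\<Sum>y\<in>C. A x y * (if y = z then 1 else 0)) = 0"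
    using assms(1,2) by (simp add: if_distrib cong: if_cong)
  then have "\<forall>y\<in>C. (if y = z then 1 else 0 :: real) = 0"
    by (rule kernel[THEN spec, THEN mp])
  then show False using assms(2) by auto
qed

text \<open>Gaussian elimination, by induction on the number of unknowns.\<close>

lemma square_system_solvable:
  fixes A :: "'r \<Rightarrow> 'c \<Rightarrow> real"
  assumes "finite R" "finite C" "card R = card C"
    and "\<forall>c. (\<forall>x\<in>R. (\<Sum>y\<in>C. A x y * c y) = 0) \<longrightarrow> (\<forall>y\<in>C. c y = 0)"
  shows "\<exists>c. \<forall>x\<in>R. (\<Sum>y\<in>C. A x y * c y) = b x"
  using assms
proof (induction "card C" arbitrary: R C A b)
  case 0
  then show ?case by auto
next
  case (Suc n)
  then obtain z where z: "z \<in> C" by fastforce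
  obtain x where x: "x \<in> R" and pivot: "A x z \<noteq> 0"
    using column_has_nonzero_entry[OF Suc.prems(2) z Suc.prems(4)] by blast
  let ?A = "pivot_reduce A x z"
  let ?lift = "\<lambda>c b. c(z := (b - (\<Sum>y\<in>C - {z}. A x y * c y)) / A x z)"
  have lift: "(\<Sum>y\<in>C. A u y * ?lift c b y) = (\<Sum>y\<in>C - {z}. ?A u y * c y) + A u z / A x z * b"
    for u c b using pivot_lift[of C z A x, OF Suc.prems(2) z pivot] .
  have card: "n = card (C - {z})" "card (R - {x}) = card (C - {z})"
    using Suc x z by auto
  have kernel: "\<forall>c. (\<forall>u\<in>R - {x}. (\<Sum>y\<in>C - {z}. ?A u y * c y) = 0) \<longrightarrow> (\<forall>y\<in>C - {z}. c y = 0)"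
  proof (intro allI impI)
    fix c assume c: "\<forall>u\<in>R - {x}. (\<Sum>y\<in>C - {z}. ?A u y * c y) = 0"
    have "(\<Sum>y\<in>C. A u y * ?lift c 0 y) = 0" if "u \<in> R" for u
      using c that pivot lift[of u c 0] by (cases "u = x") auto
    then have "\<forall>y\<in>C. ?lift c 0 y = 0" using Suc.prems(4) by blast
    then show "\<forall>y\<in>C - {z}. c y = 0" by (metis Diff_iff fun_upd_other singletonI)
  qed
  obtain c where c: "\<forall>u\<in>R - {x}. (\<Sum>y\<in>C - {z}. ?A u y * c y) = b u - A u z / A x z * b x"
    using Suc.hyps(1)[OF card(1) _ _ card(2) kernel, of "\<lambda>u. b u - A u z / A x z * b x"]
      Suc.prems(1,2) by blast
  have "(\<Sum>y\<in>C. A u y * ?lift c (b x) y) = b u" if "u \<in> R" for u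
    using c that pivot lift[of u c "b x"] by (cases "u = x") auto
  then show ?case by blast
qed

section \<open>Edge forms\<close>

text \<open>The forms (M_\<omega> v, w), (L_\<omega> v, w), (K_\<omega> v, w) and the V-inner product all have this
  shape, so their algebra is developed once.\<close>

definition edge_form :: "('a \<Rightarrow> 'a \<Rightarrow> real) \<Rightarrow> ('a \<Rightarrow> 'a \<Rightarrow> real) \<Rightarrow> ('a \<Rightarrow> 'a \<Rightarrow> bool) \<Rightarrow> 'a set
    \<Rightarrow> 'a set \<Rightarrow> ('a \<Rightarrow> real) \<Rightarrow> ('a \<Rightarrow> real) \<Rightarrow> real" where
  "edge_form a b E Nd \<omega> v w = (\<Sum>x\<in>Nd \<inter> \<omega>. (1/2) * (\<Sum>y\<in>{y. E x y}.
       a x y * v x * w x + b x y * (v x - v y) * (w x - w y)))"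

abbreviation Vform :: "('a::metric_space \<Rightarrow> 'a \<Rightarrow> bool) \<Rightarrow> 'a set \<Rightarrow> 'a set
    \<Rightarrow> ('a \<Rightarrow> real) \<Rightarrow> ('a \<Rightarrow> real) \<Rightarrow> real" where
  "Vform \<equiv> edge_form dist (\<lambda>x y. 1 / dist x y)"

lemma Mform_eq_edge_form: "Mform E Nd \<omega> = edge_form dist (\<lambda>_ _. 0) E Nd \<omega>"
  by (auto simp: fun_eq_iff Mform_def edge_form_def)

lemma Lform_eq_edge_form: "Lform E Nd \<omega> = edge_form (\<lambda>_ _. 0) (\<lambda>x y. 1 / dist x y) E Nd \<omega>"
  by (auto simp: fun_eq_iff Lform_def edge_form_def)

lemma Kform_eq_edge_form: "Kform \<gamma> E Nd \<omega> = edge_form (\<lambda>_ _. 0) (\<lambda>x y. \<gamma> x y / dist x y) E Nd \<omega>"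
  by (auto simp: fun_eq_iff Kform_def edge_form_def)

lemma Mform_plus_Lform: "Mform E Nd \<omega> v w + Lform E Nd \<omega> v w = Vform E Nd \<omega> v w"
  by (simp add: Mform_def Lform_def edge_form_def sum.distrib add_divide_distrib)

lemma Vnorm_eq: "Vnorm E Nd \<omega> v = sqrt (Vform E Nd \<omega> v v)"
  by (simp add: Vnorm_def Mform_plus_Lform)

lemma edge_form_commute: "edge_form a b E Nd \<omega> v w = edge_form a b E Nd \<omega> w v"
  unfolding edge_form_def
  by (intro sum.cong refl arg_cong[where f="\<lambda>t. (1/2) * t"]) (simp add: algebra_simps)

lemma edge_form_linear_right:
  "edge_form a b E Nd \<omega> v (\<lambda>x. p * w1 x + q * w2 x)
     = p * edge_form a b E Nd \<omega> v w1 + q * edge_form a b E Nd \<omega> v w2"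
  unfolding edge_form_def
  by (simp add: sum_distrib_left sum.distrib[symmetric] algebra_simps)

lemma edge_form_add_right:
  "edge_form a b E Nd \<omega> v (\<lambda>x. w1 x + w2 x) = edge_form a b E Nd \<omega> v w1 + edge_form a b E Nd \<omega> v w2"
  using edge_form_linear_right[of a b E Nd \<omega> v 1 w1 1 w2] by simp

lemma edge_form_scale_right: "edge_form a b E Nd \<omega> v (\<lambda>x. p * w x) = p * edge_form a b E Nd \<omega> v w"
  using edge_form_linear_right[of a b E Nd \<omega> v p w 0 w] by simp

lemma edge_form_diff_right:
  "edge_form a b E Nd \<omega> v (\<lambda>x. w1 x - w2 x) = edge_form a b E Nd \<omega> v w1 - edge_form a b E Nd \<omega> v w2"
  using edge_form_linear_right[of a b E Nd \<omega> v 1 w1 "-1" w2] by simp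

lemma edge_form_sum_right:
  "edge_form a b E Nd \<omega> v (\<lambda>x. \<Sum>z\<in>Z. c z * h z x) = (\<Sum>z\<in>Z. c z * edge_form a b E Nd \<omega> v (h z))"
proof (induction Z rule: infinite_finite_induct)
  case (infinite Z)
  then show ?case using edge_form_scale_right[of a b E Nd \<omega> v 0] by simp
next
  case empty
  then show ?case using edge_form_scale_right[of a b E Nd \<omega> v 0] by simp
next
  case (insert z Z)
  then show ?case by (simp add: edge_form_add_right edge_form_scale_right)
qed

lemma edge_form_add_left:
  "edge_form a b E Nd \<omega> (\<lambda>x. w1 x + w2 x) v = edge_form a b E Nd \<omega> w1 v + edge_form a b E Nd \<omega> w2 v"
  by (metis edge_form_commute edge_form_add_right)

lemma edge_form_scale_left: "edge_form a b E Nd \<omega> (\<lambda>x. p * w x) v = p * edge_form a b E Nd \<omega> w v"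
  by (metis edge_form_commute edge_form_scale_right)

lemma edge_form_diff_left:
  "edge_form a b E Nd \<omega> (\<lambda>x. w1 x - w2 x) v = edge_form a b E Nd \<omega> w1 v - edge_form a b E Nd \<omega> w2 v"
  by (metis edge_form_commute edge_form_diff_right)

lemma edge_form_sum_left:
  "edge_form a b E Nd \<omega> (\<lambda>x. \<Sum>z\<in>Z. c z * h z x) v = (\<Sum>z\<in>Z. c z * edge_form a b E Nd \<omega> (h z) v)"
  by (subst edge_form_commute, subst edge_form_sum_right) (simp add: edge_form_commute)

lemma edge_form_square_expand:
  "edge_form a b E Nd \<omega> (\<lambda>x. h x + k * u x) (\<lambda>x. h x + k * u x)
     = edge_form a b E Nd \<omega> h h + 2 * k * edge_form a b E Nd \<omega> h u + k\<^sup>2 * edge_form a b E Nd \<omega> u u"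
  by (simp add: edge_form_add_left edge_form_add_right edge_form_scale_left edge_form_scale_right
      edge_form_commute[of a b E Nd \<omega> u h] power2_eq_square algebra_simps)

lemma edge_form_cong:
  assumes "\<forall>x\<in>Nd \<inter> \<omega>. v x = v' x \<and> w x = w' x \<and> (\<forall>y. E x y \<longrightarrow> v y = v' y \<and> w y = w' y)"
  shows "edge_form a b E Nd \<omega> v w = edge_form a b E Nd \<omega> v' w'"
  unfolding edge_form_def using assms by (intro sum.cong refl arg_cong[where f="\<lambda>t. (1/2) * t"]) auto

lemma Mform_cong:
  assumes "\<forall>x\<in>Nd \<inter> \<omega>. v x = v' x \<and> w x = w' x"
  shows "Mform E Nd \<omega> v w = Mform E Nd \<omega> v' w'"
  unfolding Mform_def using assms by (intro sum.cong refl) auto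

lemma Mform_cong_support:
  assumes "\<forall>x\<in>Nd \<inter> \<omega>. v x \<noteq> 0 \<longrightarrow> w x = w' x"
  shows "Mform E Nd \<omega> v w = Mform E Nd \<omega> v w'"
  unfolding Mform_def using assms by (intro sum.cong refl) (metis mult_zero_left mult_zero_right)

lemma Mform_diff_left: "Mform E Nd \<omega> (\<lambda>x. v x - w x) u = Mform E Nd \<omega> v u - Mform E Nd \<omega> w u"
  unfolding Mform_eq_edge_form by (rule edge_form_diff_left)

lemma Mform_diff_right: "Mform E Nd \<omega> u (\<lambda>x. v x - w x) = Mform E Nd \<omega> u v - Mform E Nd \<omega> u w"
  unfolding Mform_eq_edge_form by (rule edge_form_diff_right)

lemma Mform_const_left: "Mform E Nd \<omega> (\<lambda>_. c) w = c * Mform E Nd \<omega> (\<lambda>_. 1) w"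
  using edge_form_scale_left[of dist "\<lambda>_ _. 0" E Nd \<omega> c "\<lambda>_. 1" w] by (simp add: Mform_eq_edge_form)

lemma Mform_const_right: "Mform E Nd \<omega> w (\<lambda>_. c) = c * Mform E Nd \<omega> w (\<lambda>_. 1)"
  using edge_form_scale_right[of dist "\<lambda>_ _. 0" E Nd \<omega> w c "\<lambda>_. 1"] by (simp add: Mform_eq_edge_form)

definition nonneg_weights :: "('a \<Rightarrow> 'a \<Rightarrow> bool) \<Rightarrow> ('a \<Rightarrow> 'a \<Rightarrow> real) \<Rightarrow> ('a \<Rightarrow> 'a \<Rightarrow> real) \<Rightarrow> bool" where
  "nonneg_weights E a b \<longleftrightarrow> (\<forall>x y. E x y \<longrightarrow> 0 \<le> a x y \<and> 0 \<le> b x y)"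

lemma edge_term_nonneg:
  fixes a b v w :: real
  shows "0 \<le> a \<Longrightarrow> 0 \<le> b \<Longrightarrow> 0 \<le> a * v * v + b * (v - w) * (v - w)"
  by (metis add_nonneg_nonneg mult.assoc mult_nonneg_nonneg zero_le_square)

lemma edge_form_nonneg:
  assumes "nonneg_weights E a b"
  shows "0 \<le> edge_form a b E Nd \<omega> v v"
  unfolding edge_form_def using assms
  by (intro sum_nonneg mult_nonneg_nonneg) (auto simp: nonneg_weights_def intro!: sum_nonneg edge_term_nonneg)

lemma quadratic_nonneg_imp_discriminant_le:
  fixes A B C :: real
  assumes "\<forall>t. 0 \<le> A + 2 * t * B + t\<^sup>2 * C" "0 \<le> C"
  shows "B\<^sup>2 \<le> A * C"
proof (cases "C = 0")
  case True
  have "B = 0"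
  proof (rule ccontr)
    assume "B \<noteq> 0"
    have "0 \<le> A + 2 * (- (A + 1) / (2 * B)) * B + (- (A + 1) / (2 * B))\<^sup>2 * C"
      using assms(1) by blast
    then show False using True \<open>B \<noteq> 0\<close> by (simp add: field_simps)
  qed
  then show ?thesis using True by simp
next
  case False
  then have "C > 0" using assms(2) by simp
  have "0 \<le> A + 2 * (- B / C) * B + (- B / C)\<^sup>2 * C" using assms(1) by blast
  also have "\<dots> = A - B\<^sup>2 / C" using \<open>C > 0\<close> by (simp add: field_simps power2_eq_square)
  finally show ?thesis using \<open>C > 0\<close> by (simp add: field_simps)
qed

lemma edge_form_Cauchy_Schwarz:
  assumes "nonneg_weights E a b"
  shows "\<bar>edge_form a b E Nd \<omega> v w\<bar> \<le> sqrt (edge_form a b E Nd \<omega> v v) * sqrt (edge_form a b E Nd \<omega> w w)"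
proof -
  let ?G = "edge_form a b E Nd \<omega>"
  have "0 \<le> ?G v v + 2 * t * ?G v w + t\<^sup>2 * ?G w w" for t
    using edge_form_nonneg[OF assms, of Nd \<omega> "\<lambda>x. v x + t * w x"] by (simp add: edge_form_square_expand)
  then have "(?G v w)\<^sup>2 \<le> ?G v v * ?G w w"
    using quadratic_nonneg_imp_discriminant_le edge_form_nonneg[OF assms] by blast
  then show ?thesis by (metis real_sqrt_abs real_sqrt_le_mono real_sqrt_mult)
qed

lemma edge_form_eq_0_imp_edge_terms:
  assumes "nonneg_weights E a b" "finite Nd" "\<forall>x y. E x y \<longrightarrow> y \<in> Nd"
    and "edge_form a b E Nd \<omega> v v = 0" "x \<in> Nd \<inter> \<omega>" "E x y"
  shows "a x y * v x * v x = 0 \<and> b x y * (v x - v y) * (v x - v y) = 0"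
proof -
  let ?t = "\<lambda>x y. a x y * v x * v x + b x y * (v x - v y) * (v x - v y)"
  have t_nonneg: "0 \<le> ?t x y" if "E x y" for x y
    using assms(1) that by (simp add: nonneg_weights_def edge_term_nonneg)
  have "finite {y. E x y}" using assms(2,3) by (metis finite_subset mem_Collect_eq subsetI)
  have "(\<Sum>x\<in>Nd \<inter> \<omega>. (1/2) * (\<Sum>y\<in>{y. E x y}. ?t x y)) = 0"
    using assms(4) by (simp add: edge_form_def)
  then have "(1/2) * (\<Sum>y\<in>{y. E x y}. ?t x y) = 0"
    using assms(2,5) t_nonneg by (subst (asm) sum_nonneg_eq_0_iff) (auto intro!: sum_nonneg)
  then have "?t x y = 0"
    using sum_nonneg_eq_0_iff[OF \<open>finite {y. E x y}\<close>, of "?t x"] assms(6) t_nonneg by auto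
  moreover have "0 \<le> a x y * v x * v x" "0 \<le> b x y * (v x - v y) * (v x - v y)"
    using assms(1,6) by (auto simp: nonneg_weights_def mult.assoc)
  ultimately show ?thesis by linarith
qed

lemma edge_form_sum_disjoint_cover:
  assumes "finite Ts" "finite Nd" "disjoint Ts" "Nd \<subseteq> \<Union>Ts"
  shows "edge_form a b E Nd UNIV v w = (\<Sum>T\<in>Ts. edge_form a b E Nd T v w)"
proof -
  have "(\<Sum>T\<in>Ts. edge_form a b E Nd T v w) = (\<Sum>x\<in>(\<Union>T\<in>Ts. Nd \<inter> T). (1/2) * (\<Sum>y\<in>{y. E x y}.
       a x y * v x * w x + b x y * (v x - v y) * (w x - w y)))"
    unfolding edge_form_def using assms(1-3)
    by (subst sum.UNION_disjoint) (auto simp: disjoint_def)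
  also have "(\<Union>T\<in>Ts. Nd \<inter> T) = Nd \<inter> UNIV" using assms(4) by auto
  finally show ?thesis by (simp add: edge_form_def)
qed

lemma edge_form_sum_overlap_le:
  assumes "nonneg_weights E a b" "finite Ts" "finite Nd"
    and "\<forall>x\<in>Nd. card {T\<in>Ts. x \<in> \<omega> T} \<le> N"
  shows "(\<Sum>T\<in>Ts. edge_form a b E Nd (\<omega> T) v v) \<le> real N * edge_form a b E Nd UNIV v v"
proof -
  define t where "t x = (1/2) * (\<Sum>y\<in>{y. E x y}. a x y * v x * v x + b x y * (v x - v y) * (v x - v y))" for x
  have t_nonneg: "0 \<le> t x" for x unfolding t_def using assms(1)
    by (intro mult_nonneg_nonneg sum_nonneg) (auto simp: nonneg_weights_def intro!: edge_term_nonneg)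
  have "edge_form a b E Nd (\<omega> T) v v = (\<Sum>x\<in>Nd. if x \<in> \<omega> T then t x else 0)" for T
  proof -
    have "edge_form a b E Nd (\<omega> T) v v = (\<Sum>x\<in>Nd \<inter> \<omega> T. t x)" by (simp add: edge_form_def t_def)
    also have "\<dots> = (\<Sum>x\<in>Nd. if x \<in> \<omega> T then t x else 0)"
      using assms(3) by (simp add: sum.inter_restrict)
    finally show ?thesis .
  qed
  then have "(\<Sum>T\<in>Ts. edge_form a b E Nd (\<omega> T) v v) = (\<Sum>T\<in>Ts. \<Sum>x\<in>Nd. if x \<in> \<omega> T then t x else 0)"
    by simp
  also have "\<dots> = (\<Sum>x\<in>Nd. \<Sum>T\<in>Ts. if x \<in> \<omega> T then t x else 0)" by (rule sum.swap)
  also have "\<dots> = (\<Sum>x\<in>Nd. real (card {T\<in>Ts. x \<in> \<omega> T}) * t x)"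
    using assms(2) by (intro sum.cong refl) (simp add: sum.If_cases Int_def)
  also have "\<dots> \<le> (\<Sum>x\<in>Nd. real N * t x)"
    using assms(4) t_nonneg by (intro sum_mono mult_right_mono) auto
  also have "\<dots> = real N * edge_form a b E Nd UNIV v v" by (simp add: edge_form_def t_def sum_distrib_left)
  finally show ?thesis .
qed

section \<open>Variational problems on the network\<close>

definition supported_on :: "'a set \<Rightarrow> ('a \<Rightarrow> real) set" where
  "supported_on S = {v. \<forall>x. x \<notin> S \<longrightarrow> v x = 0}"

lemma supported_on_expand:
  assumes "finite S" "v \<in> supported_on S"
  shows "v = (\<lambda>x. \<Sum>z\<in>S. v z * indicator {z} x)"
proof
  fix x
  have "(\<Sum>z\<in>S. v z * indicator {z} x) = (\<Sum>z\<in>S. if x = z then v z else 0)"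
    by (rule sum.cong) (auto simp: indicator_def)
  also have "\<dots> = (if x \<in> S then v x else 0)" using assms(1) by simp
  finally show "v x = (\<Sum>z\<in>S. v z * indicator {z} x)" using assms(2) by (auto simp: supported_on_def)
qed

lemma supported_on_diff: "u \<in> supported_on S \<Longrightarrow> v \<in> supported_on S \<Longrightarrow> (\<lambda>x. u x - v x) \<in> supported_on S"
  by (simp add: supported_on_def)

text \<open>Finite-dimensional Lax--Milgram: a form that is definite on the functions supported on a finite
  set represents every linear functional there, its Gram matrix on the point masses being injective.\<close>

lemma edge_form_solvable:
  fixes F :: "('a \<Rightarrow> real) \<Rightarrow> real"
  assumes fin: "finite S"
    and F_linear: "\<And>c h. F (\<lambda>x. \<Sum>z\<in>S. c z * h z x) = (\<Sum>z\<in>S. c z * F (h z))"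
    and definite: "\<And>v. v \<in> supported_on S \<Longrightarrow> edge_form a b E Nd \<omega> v v = 0 \<Longrightarrow> \<forall>x. v x = 0"
  shows "\<exists>u\<in>supported_on S. \<forall>v\<in>supported_on S. edge_form a b E Nd \<omega> u v = F v"
proof -
  let ?B = "edge_form a b E Nd \<omega>"
  let ?comb = "\<lambda>c x. \<Sum>y\<in>S. c y * indicator {y} x"
  have comb_supported: "?comb c \<in> supported_on S" for c
    by (auto simp: supported_on_def indicator_def intro!: sum.neutral)
  have gram: "?B (indicator {x}) (?comb c) = (\<Sum>y\<in>S. ?B (indicator {x}) (indicator {y}) * c y)" for x c
    by (simp add: edge_form_sum_right mult.commute)
  have kernel: "\<forall>c. (\<forall>x\<in>S. (\<Sum>y\<in>S. ?B (indicator {x}) (indicator {y}) * c y) = 0) \<longrightarrow> (\<forall>y\<in>S. c y = 0)"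
  proof (intro allI impI)
    fix c assume c: "\<forall>x\<in>S. (\<Sum>y\<in>S. ?B (indicator {x}) (indicator {y}) * c y) = 0"
    have "?B (?comb c) (?comb c) = (\<Sum>x\<in>S. c x * ?B (indicator {x}) (?comb c))"
      by (rule edge_form_sum_left)
    also have "\<dots> = 0" using c by (simp add: gram)
    finally have "\<forall>x. ?comb c x = 0" using definite comb_supported by blast
    moreover have "?comb c y = c y" if "y \<in> S" for y
      using fin that by (simp add: indicator_def if_distrib cong: if_cong)
    ultimately show "\<forall>y\<in>S. c y = 0" by metis
  qed
  obtain c where c: "\<forall>x\<in>S. (\<Sum>y\<in>S. ?B (indicator {x}) (indicator {y}) * c y) = F (indicator {x})"
    using square_system_solvable[OF fin fin refl kernel, of "\<lambda>x. F (indicator {x})"] by blast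
  have "?B (?comb c) v = F v" if v: "v \<in> supported_on S" for v
  proof -
    have "?B (?comb c) v = ?B (?comb c) (\<lambda>x. \<Sum>z\<in>S. v z * indicator {z} x)"
      using supported_on_expand[OF fin v] by simp
    also have "\<dots> = (\<Sum>z\<in>S. v z * ?B (?comb c) (indicator {z}))"
      by (rule edge_form_sum_right)
    also have "\<dots> = (\<Sum>z\<in>S. v z * F (indicator {z}))"
      using c by (simp add: edge_form_commute[of a b E Nd \<omega> "?comb c"] gram)
    also have "\<dots> = F v" by (subst (2) supported_on_expand[OF fin v]) (simp add: F_linear)
    finally show ?thesis .
  qed
  then show ?thesis using comb_supported by blast
qed

lemma edge_form_solution_unique:
  assumes definite: "\<And>v. v \<in> supported_on S \<Longrightarrow> edge_form a b E Nd \<omega> v v = 0 \<Longrightarrow> \<forall>x. v x = 0"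
    and "u \<in> supported_on S" "\<forall>v\<in>supported_on S. edge_form a b E Nd \<omega> u v = F v"
    and "u' \<in> supported_on S" "\<forall>v\<in>supported_on S. edge_form a b E Nd \<omega> u' v = F v"
  shows "u' = u"
proof -
  let ?d = "\<lambda>x. u' x - u x"
  have "?d \<in> supported_on S" using assms(2,4) by (rule supported_on_diff[rotated])
  moreover have "edge_form a b E Nd \<omega> ?d ?d = 0"
    using assms(3,5) \<open>?d \<in> supported_on S\<close> by (simp add: edge_form_diff_left)
  ultimately show "u' = u" using definite by fastforce
qed

lemma edge_form_unique_solution:
  assumes "finite S"
    and "\<And>c h. F (\<lambda>x. \<Sum>z\<in>S. c z * h z x) = (\<Sum>z\<in>S. c z * F (h z))"
    and "\<And>v. v \<in> supported_on S \<Longrightarrow> edge_form a b E Nd \<omega> v v = 0 \<Longrightarrow> \<forall>x. v x = 0"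
  shows "\<exists>!u. u \<in> supported_on S \<and> (\<forall>v\<in>supported_on S. edge_form a b E Nd \<omega> u v = F v)"
proof (rule ex_ex1I)
  show "\<exists>u. u \<in> supported_on S \<and> (\<forall>v\<in>supported_on S. edge_form a b E Nd \<omega> u v = F v)"
    using edge_form_solvable[of S F, OF assms] by blast
qed (use edge_form_solution_unique[OF assms(3)] in blast)

definition nbhd :: "('a \<Rightarrow> 'a \<Rightarrow> bool) \<Rightarrow> 'a set \<Rightarrow> 'a set \<Rightarrow> 'a set" where
  "nbhd E Nd \<omega> = \<omega> \<union> {x. \<exists>y\<in>Nd \<inter> \<omega>. E x y}"

lemma Vsp_eq_supported_on: "Vsp Nd \<Gamma> = supported_on (Nd - \<Gamma>)"
  by (auto simp: Vsp_def hatV_def supported_on_def)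

lemma Vloc_eq_supported_on: "Vloc Nd \<Gamma> \<omega> = supported_on ((Nd - \<Gamma>) \<inter> \<omega>)"
  by (auto simp: Vloc_def Vsp_def hatV_def supported_on_def)

lemma Vtilde_eq_supported_on: "Vtilde E Nd \<Gamma> \<omega> = supported_on ((Nd - \<Gamma>) \<inter> nbhd E Nd \<omega>)"
  by (auto simp: Vtilde_def Vsp_def hatV_def supported_on_def nbhd_def)

locale weighted_network =
  fixes Nd :: "'a::metric_space set" and E :: "'a \<Rightarrow> 'a \<Rightarrow> bool" and \<Gamma> :: "'a set"
    and \<gamma> :: "'a \<Rightarrow> 'a \<Rightarrow> real" and \<alpha> \<beta> :: real
  assumes finite_nodes: "finite Nd" and two_nodes: "card Nd \<ge> 2"
    and edge_nodes: "E x y \<Longrightarrow> x \<in> Nd \<and> y \<in> Nd \<and> x \<noteq> y \<and> E y x"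
    and nodes_connected: "x \<in> Nd \<Longrightarrow> y \<in> Nd \<Longrightarrow> E\<^sup>*\<^sup>* x y"
    and boundary_node: "Nd \<inter> \<Gamma> \<noteq> {}"
    and weight_bounds: "E x y \<Longrightarrow> \<gamma> x y = \<gamma> y x \<and> \<alpha> \<le> \<gamma> x y \<and> \<gamma> x y \<le> \<beta>"
    and alpha_pos: "0 < \<alpha>"
begin

lemma edge_in_nodes: "E x y \<Longrightarrow> x \<in> Nd \<and> y \<in> Nd"
  using edge_nodes by blast

lemma edge_sym: "E x y \<Longrightarrow> E y x"
  using edge_nodes by blast

lemma edge_targets_nodes: "\<forall>x y. E x y \<longrightarrow> y \<in> Nd"
  using edge_nodes by blast

lemma edge_dist_pos: "E x y \<Longrightarrow> dist x y > 0"
  using edge_nodes by simp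

lemma weight_pos: "E x y \<Longrightarrow> \<gamma> x y > 0"
  using weight_bounds alpha_pos by force

lemma exists_neighbour:
  assumes "x \<in> Nd"
  shows "\<exists>y. E x y"
proof -
  have "\<not> Nd \<subseteq> {x}"
    using two_nodes card_mono[of "{x}" Nd] by auto
  then obtain y where "y \<in> Nd" "y \<noteq> x" by blast
  then show ?thesis using nodes_connected[OF assms] by (metis converse_rtranclpE)
qed

lemma beta_pos: "0 < \<beta>"
proof -
  obtain x y where "E x y" using boundary_node exists_neighbour by blast
  then show ?thesis using weight_bounds alpha_pos by force
qed

lemma nonneg_weights_M: "nonneg_weights E dist (\<lambda>_ _. 0)"
  and nonneg_weights_L: "nonneg_weights E (\<lambda>_ _. 0) (\<lambda>x y. 1 / dist x y)"
  and nonneg_weights_K: "nonneg_weights E (\<lambda>_ _. 0) (\<lambda>x y. \<gamma> x y / dist x y)"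
  and nonneg_weights_V: "nonneg_weights E dist (\<lambda>x y. 1 / dist x y)"
  using weight_pos by (auto simp: nonneg_weights_def less_imp_le)

lemma Mform_nonneg: "0 \<le> Mform E Nd \<omega> v v"
  unfolding Mform_eq_edge_form by (rule edge_form_nonneg[OF nonneg_weights_M])

lemma Lform_nonneg: "0 \<le> Lform E Nd \<omega> v v"
  unfolding Lform_eq_edge_form by (rule edge_form_nonneg[OF nonneg_weights_L])

lemma Kform_nonneg: "0 \<le> Kform \<gamma> E Nd \<omega> v v"
  unfolding Kform_eq_edge_form by (rule edge_form_nonneg[OF nonneg_weights_K])

lemma Vform_nonneg: "0 \<le> Vform E Nd \<omega> v v"
  by (rule edge_form_nonneg[OF nonneg_weights_V])

lemma semi_Mform_sq: "(semi (Mform E Nd \<omega>) v)\<^sup>2 = Mform E Nd \<omega> v v"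
  using Mform_nonneg by (simp add: semi_def)

lemma semi_Mform_nonneg: "0 \<le> semi (Mform E Nd \<omega>) v"
  using Mform_nonneg by (simp add: semi_def)

lemma semi_Lform_sq: "(semi (Lform E Nd \<omega>) v)\<^sup>2 = Lform E Nd \<omega> v v"
  using Lform_nonneg by (simp add: semi_def)

lemma Vnorm_nonneg: "0 \<le> Vnorm E Nd \<omega> v"
  by (simp add: Vnorm_eq Vform_nonneg)

lemma Mform_Cauchy_Schwarz: "\<bar>Mform E Nd \<omega> v w\<bar> \<le> sqrt (Mform E Nd \<omega> v v) * sqrt (Mform E Nd \<omega> w w)"
  unfolding Mform_eq_edge_form by (rule edge_form_Cauchy_Schwarz[OF nonneg_weights_M])

lemma Kform_ge_Lform: "\<alpha> * Lform E Nd \<omega> v v \<le> Kform \<gamma> E Nd \<omega> v v"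
  unfolding Lform_def Kform_def sum_distrib_left
  by (intro sum_mono) (auto simp: sum_distrib_left weight_bounds edge_dist_pos mult.assoc
      intro!: sum_mono mult_right_mono divide_right_mono)

lemma Kform_le_Lform: "Kform \<gamma> E Nd \<omega> v v \<le> \<beta> * Lform E Nd \<omega> v v"
  unfolding Lform_def Kform_def sum_distrib_left
  by (intro sum_mono) (auto simp: sum_distrib_left weight_bounds edge_dist_pos mult.assoc
      intro!: sum_mono mult_right_mono divide_right_mono)

lemma Kform_definite:
  assumes v: "v \<in> supported_on ((Nd - \<Gamma>) \<inter> \<omega>)" and K0: "Kform \<gamma> E Nd \<omega> v v = 0"
  shows "\<forall>x. v x = 0"
proof (rule ccontr)
  assume "\<not> ?thesis"
  then obtain x0 where x0: "v x0 \<noteq> 0" by blast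
  have edge_const: "v y = v x" if "x \<in> Nd \<inter> \<omega>" "E x y" for x y
  proof -
    have "\<gamma> x y / dist x y * (v x - v y) * (v x - v y) = 0"
      using edge_form_eq_0_imp_edge_terms[OF nonneg_weights_K finite_nodes edge_targets_nodes
          K0[unfolded Kform_eq_edge_form] that] by simp
    then show ?thesis using weight_pos[OF that(2)] edge_dist_pos[OF that(2)] by simp
  qed
  obtain z where z: "z \<in> Nd" "z \<in> \<Gamma>" using boundary_node by blast
  have "x0 \<in> Nd" using v x0 by (auto simp: supported_on_def)
  then have "E\<^sup>*\<^sup>* x0 z" using nodes_connected z(1) by blast
  then have "v z = v x0"
  proof (induction rule: rtranclp_induct)
    case (step y y')
    then have "y \<in> Nd \<inter> \<omega>" using v x0 by (auto simp: supported_on_def)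
    then show ?case using edge_const step by metis
  qed simp
  then show False using v z x0 by (auto simp: supported_on_def)
qed

lemma Vform_definite:
  assumes v: "v \<in> supported_on ((Nd - \<Gamma>) \<inter> nbhd E Nd \<omega>)" and V0: "Vform E Nd \<omega> v v = 0"
  shows "\<forall>x. v x = 0"
proof -
  have vanish: "v x = 0 \<and> v y = 0" if "x \<in> Nd \<inter> \<omega>" "E x y" for x y
  proof -
    have "dist x y * v x * v x = 0 \<and> 1 / dist x y * (v x - v y) * (v x - v y) = 0"
      using edge_form_eq_0_imp_edge_terms[OF nonneg_weights_V finite_nodes edge_targets_nodes V0 that] by simp
    then show ?thesis using edge_dist_pos[OF that(2)] by simp
  qed
  show ?thesis
  proof (rule allI, rule ccontr)
    fix x assume nz: "v x \<noteq> 0"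
    then have x: "x \<in> Nd" "x \<in> nbhd E Nd \<omega>" using v by (auto simp: supported_on_def)
    show False
    proof (cases "x \<in> \<omega>")
      case True
      obtain y where "E x y" using exists_neighbour x(1) by blast
      then show False using vanish[of x y] True x(1) nz by simp
    next
      case False
      then obtain y where "y \<in> Nd \<inter> \<omega>" "E x y" using x(2) by (auto simp: nbhd_def)
      then show False using vanish[of y x] edge_nodes[of x y] nz by simp
    qed
  qed
qed

lemma nbhd_edge:
  assumes "E x y" "x \<in> Nd \<inter> \<omega> \<or> y \<in> Nd \<inter> \<omega>"
  shows "x \<in> nbhd E Nd \<omega> \<and> y \<in> nbhd E Nd \<omega>"
  using assms edge_sym[OF assms(1)] unfolding nbhd_def by blast

lemma cutoff_in_Vtilde:
  "v \<in> Vsp Nd \<Gamma> \<Longrightarrow> (\<lambda>x. if x \<in> nbhd E Nd \<omega> then v x else 0) \<in> Vtilde E Nd \<Gamma> \<omega>"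
  by (auto simp: Vtilde_eq_supported_on Vsp_eq_supported_on supported_on_def)

lemma Kform_cutoff_right:
  assumes "\<And>x. \<phi> x \<noteq> 0 \<Longrightarrow> x \<in> Nd \<inter> \<omega>"
  shows "Kform \<gamma> E Nd UNIV \<phi> (\<lambda>x. if x \<in> nbhd E Nd \<omega> then v x else 0) = Kform \<gamma> E Nd UNIV \<phi> v"
  unfolding Kform_def
proof (intro sum.cong refl arg_cong[where f="\<lambda>t. (1/2) * t"])
  fix x y assume "y \<in> {y. E x y}"
  then have "\<phi> x = 0 \<and> \<phi> y = 0 \<or> x \<in> nbhd E Nd \<omega> \<and> y \<in> nbhd E Nd \<omega>"
    using assms nbhd_edge by auto
  then show "\<gamma> x y * (\<phi> x - \<phi> y) * ((if x \<in> nbhd E Nd \<omega> then v x else 0) - (if y \<in> nbhd E Nd \<omega> then v y else 0)) / dist x y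
      = \<gamma> x y * (\<phi> x - \<phi> y) * (v x - v y) / dist x y"
    by auto
qed

lemma Vform_cutoff:
  "Vform E Nd \<omega> (\<lambda>x. if x \<in> nbhd E Nd \<omega> then v x else 0) (\<lambda>x. if x \<in> nbhd E Nd \<omega> then v x else 0)
     = Vform E Nd \<omega> v v"
  by (rule edge_form_cong) (auto simp: nbhd_def dest: nbhd_edge)

lemma Kinv_solves:
  "Kinv \<gamma> E Nd \<Gamma> f \<in> Vsp Nd \<Gamma> \<and>
   (\<forall>v\<in>Vsp Nd \<Gamma>. Kform \<gamma> E Nd UNIV (Kinv \<gamma> E Nd \<Gamma> f) v = Mform E Nd UNIV f v)"
proof -
  have "\<exists>!u. u \<in> supported_on (Nd - \<Gamma>) \<and>
      (\<forall>v\<in>supported_on (Nd - \<Gamma>). Kform \<gamma> E Nd UNIV u v = Mform E Nd UNIV f v)"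
    unfolding Kform_eq_edge_form
  proof (rule edge_form_unique_solution)
    show "finite (Nd - \<Gamma>)" using finite_nodes by simp
    show "Mform E Nd UNIV f (\<lambda>x. \<Sum>z\<in>Nd - \<Gamma>. c z * h z x) = (\<Sum>z\<in>Nd - \<Gamma>. c z * Mform E Nd UNIV f (h z))"
      for c h by (simp only: Mform_eq_edge_form edge_form_sum_right)
  qed (use Kform_definite[of _ UNIV] in \<open>simp add: Kform_eq_edge_form\<close>)
  then show ?thesis unfolding Kinv_def Vsp_eq_supported_on by (rule theI')
qed

lemma Kinv_loc_solves:
  "Kinv_loc \<gamma> E Nd \<Gamma> \<omega> g \<in> Vloc Nd \<Gamma> \<omega> \<and>
   (\<forall>v\<in>Vloc Nd \<Gamma> \<omega>. Kform \<gamma> E Nd \<omega> (Kinv_loc \<gamma> E Nd \<Gamma> \<omega> g) v = Mform E Nd \<omega> g v)"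
proof -
  have "\<exists>!u. u \<in> supported_on ((Nd - \<Gamma>) \<inter> \<omega>) \<and>
      (\<forall>v\<in>supported_on ((Nd - \<Gamma>) \<inter> \<omega>). Kform \<gamma> E Nd \<omega> u v = Mform E Nd \<omega> g v)"
    unfolding Kform_eq_edge_form
  proof (rule edge_form_unique_solution)
    show "finite ((Nd - \<Gamma>) \<inter> \<omega>)" using finite_nodes by simp
    show "Mform E Nd \<omega> g (\<lambda>x. \<Sum>z\<in>(Nd - \<Gamma>) \<inter> \<omega>. c z * h z x)
        = (\<Sum>z\<in>(Nd - \<Gamma>) \<inter> \<omega>. c z * Mform E Nd \<omega> g (h z))"
      for c h by (simp only: Mform_eq_edge_form edge_form_sum_right)
  qed (use Kform_definite[of _ \<omega>] in \<open>simp add: Kform_eq_edge_form\<close>)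
  then show ?thesis unfolding Kinv_loc_def Vloc_eq_supported_on by (rule theI')
qed

lemma Rop_solves:
  "Rop \<gamma> E Nd \<Gamma> \<omega> q \<in> Vtilde E Nd \<Gamma> \<omega> \<and>
   (\<forall>v\<in>Vtilde E Nd \<Gamma> \<omega>. Vform E Nd \<omega> (Rop \<gamma> E Nd \<Gamma> \<omega> q) v
       = Kform \<gamma> E Nd UNIV (Kinv_loc \<gamma> E Nd \<Gamma> \<omega> q) v - Mform E Nd UNIV q v)"
proof -
  let ?S = "(Nd - \<Gamma>) \<inter> nbhd E Nd \<omega>"
  let ?F = "\<lambda>v. Kform \<gamma> E Nd UNIV (Kinv_loc \<gamma> E Nd \<Gamma> \<omega> q) v - Mform E Nd UNIV q v"
  have ex: "\<exists>!u. u \<in> supported_on ?S \<and> (\<forall>v\<in>supported_on ?S. Vform E Nd \<omega> u v = ?F v)"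
  proof (rule edge_form_unique_solution)
    show "finite ?S" using finite_nodes by simp
    show "?F (\<lambda>x. \<Sum>z\<in>?S. c z * h z x) = (\<Sum>z\<in>?S. c z * ?F (h z))" for c h
      by (simp only: Kform_eq_edge_form Mform_eq_edge_form edge_form_sum_right
          flip: sum_subtractf right_diff_distrib)
  qed (rule Vform_definite)
  have LM: "Lform E Nd \<omega> u v + Mform E Nd \<omega> u v = Vform E Nd \<omega> u v" for u v
    by (simp add: Mform_plus_Lform[symmetric])
  show ?thesis
    unfolding Rop_def Vtilde_eq_supported_on LM by (rule theI'[OF ex])
qed

end

section \<open>Cartesian meshes\<close>

definition mesh_index :: "real \<Rightarrow> ('n \<Rightarrow> nat) \<Rightarrow> bool" where
  "mesh_index H a \<longleftrightarrow> (\<forall>i. real (a i + 1) * H \<le> 1)"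

lemma mesh_eq_cube_image: "mesh H = cube H ` {a. mesh_index H a}"
  by (auto simp: mesh_def mesh_index_def)

lemma index_box_eq_PiE: "{a :: 'n::finite \<Rightarrow> nat. \<forall>i. a i \<in> A i} = PiE UNIV A"
  by (auto simp: PiE_UNIV_domain Pi_def)

context
  fixes H :: real and N :: nat
  assumes H_eq: "H = 1 / real N" and N_pos: "N \<ge> 1"
begin

lemma mesh_size_pos: "H > 0"
  using H_eq N_pos by simp

lemma mesh_index_iff: "mesh_index H a \<longleftrightarrow> (\<forall>i. a i < N)"
proof -
  have "real (a i + 1) * H \<le> 1 \<longleftrightarrow> a i < N" for i
    using H_eq N_pos by (simp add: divide_le_eq_1 Suc_le_eq flip: of_nat_Suc)
  then show ?thesis by (simp add: mesh_index_def)
qed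

lemma finite_mesh_indices: "finite {a :: 'n::finite \<Rightarrow> nat. mesh_index H a}"
proof -
  have "{a :: 'n \<Rightarrow> nat. mesh_index H a} = {a. \<forall>i. a i \<in> {..<N}}" by (simp add: mesh_index_iff)
  then show ?thesis by (simp only: index_box_eq_PiE) (simp add: finite_PiE)
qed

lemma finite_mesh: "finite (mesh H :: (real^'n::finite) set set)"
  unfolding mesh_eq_cube_image by (rule finite_imageI[OF finite_mesh_indices])

lemma cube_index_unique:
  fixes x :: "real^'n::finite" and a b :: "'n \<Rightarrow> nat"
  assumes "x \<in> cube H a" "x \<in> cube H b" "mesh_index H a" "mesh_index H b"
  shows "a = b"
proof
  fix i
  have lower_below_upper: False
    if "a i < b i" "x \<in> cube H a" "x \<in> cube H b" "mesh_index H b" for a b :: "'n \<Rightarrow> nat"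
  proof -
    have "real (a i + 1) * H \<le> real (b i) * H"
      using that(1) mesh_size_pos by (intro mult_right_mono) auto
    moreover have "real (b i) * H < real (b i + 1) * H" using mesh_size_pos by simp
    ultimately show False using that(2-4) by (auto simp: cube_def mesh_index_def) (smt (verit))
  qed
  show "a i = b i"
    using lower_below_upper[of a b] lower_below_upper[of b a] assms by (meson linorder_neqE_nat)
qed

lemma Omega_point_in_cube:
  assumes "x \<in> Omega"
  shows "\<exists>a. mesh_index H a \<and> x \<in> cube H a"
proof -
  define a where "a i = min (nat \<lfloor>x$i * real N\<rfloor>) (N - 1)" for i
  have x01: "0 \<le> x$i" "x$i \<le> 1" for i using assms by (auto simp: Omega_def)
  have N: "real N \<ge> 1" "real N * H = 1" using N_pos H_eq by auto
  have "x \<in> cube H a"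
    unfolding cube_def
  proof (intro CollectI allI conjI)
    fix i
    have floor_le: "of_int \<lfloor>x$i * real N\<rfloor> \<le> x$i * real N" "x$i * real N < of_int \<lfloor>x$i * real N\<rfloor> + 1"
      by linarith+
    have "real (a i) \<le> real (nat \<lfloor>x$i * real N\<rfloor>)" by (simp add: a_def)
    also have "\<dots> = of_int \<lfloor>x$i * real N\<rfloor>" using x01[of i] by simp
    finally have "real (a i) \<le> x$i * real N" using floor_le by linarith
    then show "real (a i) * H \<le> x$i"
      using mesh_size_pos N by (metis mult.assoc mult.right_neutral mult_right_mono less_imp_le)
    show "x$i < real (a i + 1) * H \<or> (real (a i + 1) * H = 1 \<and> x$i \<le> 1)"
    proof (cases "nat \<lfloor>x$i * real N\<rfloor> \<le> N - 1")
      case True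
      then have "real (a i + 1) = of_int \<lfloor>x$i * real N\<rfloor> + 1" using x01[of i] by (simp add: a_def)
      then have "x$i * real N < real (a i + 1)" using floor_le by linarith
      then have "x$i * real N * H < real (a i + 1) * H" using mesh_size_pos by simp
      then show ?thesis using N by (simp add: mult.assoc)
    next
      case False
      then have "real (a i + 1) = real N" using N_pos by (simp add: a_def)
      then show ?thesis using N x01[of i] by simp
    qed
  qed
  moreover have "mesh_index H a" unfolding mesh_index_iff a_def using N_pos by auto
  ultimately show ?thesis by blast
qed

lemma disjoint_mesh: "disjoint (mesh H :: (real^'n::finite) set set)"
  unfolding mesh_eq_cube_image disjoint_def using cube_index_unique by blast

lemma Omega_subset_mesh: "Omega \<subseteq> \<Union>(mesh H :: (real^'n::finite) set set)"
  unfolding mesh_eq_cube_image using Omega_point_in_cube by blast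

definition closed_cell :: "('n \<Rightarrow> nat) \<Rightarrow> (real^'n) set" where
  "closed_cell b = {x. \<forall>i. real (b i) * H \<le> x$i \<and> x$i \<le> real (b i + 1) * H}"

lemma closed_closed_cell: "closed (closed_cell b)"
  unfolding closed_cell_def
  by (intro closed_Collect_all closed_Collect_conj closed_Collect_le continuous_intros)

lemma closure_cube_subset: "closure (cube H b) \<subseteq> closed_cell b"
proof (rule closure_minimal[OF _ closed_closed_cell])
  show "cube H b \<subseteq> closed_cell b"
    unfolding cube_def closed_cell_def by (auto dest: spec less_imp_le)
qed

lemma closed_cells_meet_imp_index_close:
  "p \<in> closed_cell a \<Longrightarrow> p \<in> closed_cell b \<Longrightarrow> a i \<le> b i + 1"
proof -
  assume "p \<in> closed_cell a" "p \<in> closed_cell b"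
  then have "real (a i) * H \<le> p$i" "p$i \<le> real (b i + 1) * H" unfolding closed_cell_def by auto
  then have "real (a i) * H \<le> real (b i + 1) * H" by linarith
  then show ?thesis using mesh_size_pos by simp
qed

definition nearby_indices :: "nat \<Rightarrow> ('n \<Rightarrow> nat) \<Rightarrow> ('n \<Rightarrow> nat) set" where
  "nearby_indices l a = {b. mesh_index H b \<and> (\<forall>i. a i \<le> b i + l \<and> b i \<le> a i + l)}"

lemma finite_nearby_indices: "finite (nearby_indices l (a :: 'n::finite \<Rightarrow> nat))"
  using finite_mesh_indices by (rule finite_subset[rotated]) (auto simp: nearby_indices_def)

lemma patch_step_nearby:
  assumes "\<omega> \<subseteq> \<Union>(cube H ` nearby_indices l (a :: 'n::finite \<Rightarrow> nat))"
    and "mesh_index H b'" "closure (cube H b') \<inter> closure \<omega> \<noteq> {}"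
  shows "b' \<in> nearby_indices (Suc l) a"
proof -
  have "closure \<omega> \<subseteq> \<Union>(closed_cell ` nearby_indices l a)"
  proof (rule closure_minimal)
    show "\<omega> \<subseteq> \<Union>(closed_cell ` nearby_indices l a)"
      using assms(1) closure_cube_subset closure_subset by blast
  qed (use finite_nearby_indices closed_closed_cell in blast)
  then obtain p b where b: "b \<in> nearby_indices l a" "p \<in> closed_cell b" "p \<in> closed_cell b'"
    using assms(3) closure_cube_subset by blast
  have "a i \<le> b' i + Suc l \<and> b' i \<le> a i + Suc l" for i
  proof -
    have "a i \<le> b i + l" "b i \<le> a i + l" using b(1) by (auto simp: nearby_indices_def)
    moreover have "b' i \<le> b i + 1" "b i \<le> b' i + 1"
      using closed_cells_meet_imp_index_close[OF b(3,2)] closed_cells_meet_imp_index_close[OF b(2,3)] by auto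
    ultimately show ?thesis by linarith
  qed
  then show ?thesis using assms(2) by (simp add: nearby_indices_def)
qed

lemma patchn_cube_subset:
  assumes "mesh_index H a"
  shows "patchn H l (cube H a) \<subseteq> \<Union>(cube H ` nearby_indices l (a :: 'n::finite \<Rightarrow> nat))"
proof (induction l)
  case 0
  have "a \<in> nearby_indices 0 a" using assms by (simp add: nearby_indices_def)
  then show ?case by (auto simp: patchn_def)
next
  case (Suc l)
  have "patchn H (Suc l) (cube H a) = patch H (patchn H l (cube H a))" by (simp add: patchn_def)
  then show ?case
    using patch_step_nearby[OF Suc.IH] unfolding patch_def mesh_eq_cube_image by blast
qed

text \<open>The indices of the cells T with x \<in> N^l(T) are within l of the index of the cube containing x.\<close>

lemma card_patchn_containing:
  assumes "x \<in> Omega"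
  shows "card {T \<in> mesh H. x \<in> patchn H l (T :: (real^'n::finite) set)} \<le> (2 * l + 1) ^ CARD('n)"
proof -
  obtain b0 :: "'n \<Rightarrow> nat" where b0: "mesh_index H b0" "x \<in> cube H b0"
    using Omega_point_in_cube assms by blast
  let ?I = "{a :: 'n \<Rightarrow> nat. \<forall>i. a i \<in> {b0 i - l .. b0 i + l}}"
  have finite_I: "finite ?I" by (subst index_box_eq_PiE) (simp add: finite_PiE)
  have covered: "{T \<in> mesh H. x \<in> patchn H l T} \<subseteq> cube H ` ?I"
  proof
    fix T assume "T \<in> {T \<in> mesh H. x \<in> patchn H l T}"
    then obtain a where a: "mesh_index H a" "T = cube H a" "x \<in> patchn H l (cube H a)"
      by (auto simp: mesh_eq_cube_image)
    then obtain b where b: "b \<in> nearby_indices l a" "x \<in> cube H b"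
      using patchn_cube_subset by blast
    then have "b = b0" using cube_index_unique b0 by (auto simp: nearby_indices_def)
    then show "T \<in> cube H ` ?I" using a(2) b(1) by (auto simp: nearby_indices_def le_diff_conv)
  qed
  have "card {T \<in> mesh H. x \<in> patchn H l T} \<le> card (cube H ` ?I)"
    by (rule card_mono[OF finite_imageI[OF finite_I] covered])
  also have "\<dots> \<le> card ?I" by (rule card_image_le[OF finite_I])
  also have "\<dots> = (\<Prod>i\<in>UNIV. card {b0 i - l .. b0 i + l})" by (subst index_box_eq_PiE) (simp add: card_PiE)
  also have "\<dots> \<le> (\<Prod>i\<in>(UNIV::'n set). 2 * l + 1)" by (intro prod_mono) auto
  finally show ?thesis by simp
qed

end

section \<open>The SLOD error estimate\<close>

lemma sqrt_le_if_mult_le_mult_sqrt: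
  fixes L Q a :: real
  assumes "0 \<le> L" "0 \<le> Q" "0 < a" "a * L \<le> Q * sqrt L"
  shows "sqrt L \<le> Q / a"
proof (cases "L = 0")
  case False
  then have "sqrt L > 0" using assms(1) by simp
  moreover have "a * sqrt L * sqrt L \<le> Q * sqrt L"
    using assms(1,4) by (simp add: mult.assoc)
  ultimately have "a * sqrt L \<le> Q" by simp
  then show ?thesis using assms(3) by (simp add: field_simps)
qed (use assms in simp)

lemma sum_sqrt_mult_le:
  assumes "\<And>i. 0 \<le> a i" "\<And>i. 0 \<le> b i"
  shows "(\<Sum>i\<in>I. sqrt (a i) * sqrt (b i)) \<le> sqrt (\<Sum>i\<in>I. a i) * sqrt (\<Sum>i\<in>I. b i)"
  using L2_set_mult_ineq[of "\<lambda>i. sqrt (a i)" "\<lambda>i. sqrt (b i)" I] assms by (simp add: L2_set_def)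

lemma sqrt_overlap_count_le:
  assumes "l \<ge> 1"
  shows "sqrt (real ((2 * l + 1) ^ d)) \<le> sqrt (3 ^ d) * real l powr (real d / 2)"
proof -
  have "real (2 * l + 1) \<le> 3 * real l" using assms by simp
  then have "real ((2 * l + 1) ^ d) \<le> (3 * real l) ^ d"
    unfolding of_nat_power by (rule power_mono) simp
  then have "sqrt (real ((2 * l + 1) ^ d)) \<le> sqrt (3 ^ d) * sqrt (real l ^ d)"
    by (simp add: power_mult_distrib flip: real_sqrt_mult)
  also have "sqrt (real l ^ d) = real l powr (real d / 2)"
    using assms by (simp add: powr_realpow[symmetric] powr_half_sqrt[symmetric] powr_powr)
  finally show ?thesis .
qed

definition slod_constant :: "real \<Rightarrow> real \<Rightarrow> real \<Rightarrow> real \<Rightarrow> nat \<Rightarrow> real" where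
  "slod_constant \<alpha> \<beta> \<mu> Cfr d = sqrt (\<beta> / \<alpha>) / \<alpha> * sqrt (3 ^ d) * (\<mu> + sqrt (Cfr\<^sup>2 + 1))"

lemma slod_constant_pos: "0 < \<alpha> \<Longrightarrow> 0 < \<beta> \<Longrightarrow> 0 < \<mu> \<Longrightarrow> 0 < slod_constant \<alpha> \<beta> \<mu> Cfr d"
  unfolding slod_constant_def by (intro mult_pos_pos divide_pos_pos add_pos_pos) (auto intro: add_nonneg_pos)

locale slod_setting = weighted_network Nd E \<Gamma> \<gamma> \<alpha> \<beta>
  for Nd :: "(real^'n) set" and E \<Gamma> \<gamma> \<alpha> \<beta> +
  fixes \<mu> Cfr H :: real and N l :: nat and Cr :: real and g :: "(real^'n) set \<Rightarrow> real^'n \<Rightarrow> real"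
  assumes H_eq: "H = 1 / real N" and N_pos: "N \<ge> 1" and l_pos: "l \<ge> 1" and mu_pos: "\<mu> > 0"
    and nodes_in_Omega: "Nd \<subseteq> Omega"
    and poincare: "\<forall>T\<in>mesh H. \<forall>v\<in>hatV Nd. \<exists>c.
      semi (Mform E Nd T) (\<lambda>x. v x - c) \<le> \<mu> * H * semi (Lform E Nd (patch H T)) v"
    and friedrichs: "\<forall>v\<in>Vsp Nd \<Gamma>. semi (Mform E Nd UNIV) v \<le> Cfr * semi (Lform E Nd UNIV) v"
    and slod_basis: "\<forall>T\<in>mesh H. slod_min \<gamma> E Nd \<Gamma> H l T (g T)"
    and riesz: "riesz_assm E Nd H Cr g"
begin

abbreviation "cells \<equiv> (mesh H :: (real^'n) set set)"
abbreviation "loc T \<equiv> patchn H l T"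
abbreviation "phi T \<equiv> Kinv_loc \<gamma> E Nd \<Gamma> (loc T) (g T)"
abbreviation "corr T \<equiv> Rop \<gamma> E Nd \<Gamma> (loc T) (g T)"

lemma finite_cells: "finite cells"
  using finite_mesh[OF H_eq N_pos] .

lemma H_pos: "H > 0"
  using mesh_size_pos[OF H_eq N_pos] .

lemma Mform_eq_sum_cells: "Mform E Nd UNIV v w = (\<Sum>T\<in>cells. Mform E Nd T v w)"
  unfolding Mform_eq_edge_form
  using Omega_subset_mesh[OF H_eq N_pos] nodes_in_Omega
  by (intro edge_form_sum_disjoint_cover finite_cells finite_nodes disjoint_mesh[OF H_eq N_pos]) auto

lemma card_patchn_containing_node:
  "x \<in> Nd \<Longrightarrow> card {T\<in>cells. x \<in> patchn H k T} \<le> (2 * k + 1) ^ CARD('n)"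
  using card_patchn_containing[OF H_eq N_pos] nodes_in_Omega by blast

lemma Lform_sum_patch_le: "(\<Sum>T\<in>cells. Lform E Nd (patch H T) z z) \<le> 3 ^ CARD('n) * Lform E Nd UNIV z z"
  using edge_form_sum_overlap_le[OF nonneg_weights_L finite_cells finite_nodes,
      of "patch H" "3 ^ CARD('n)"] card_patchn_containing_node[of _ 1]
  by (simp add: Lform_eq_edge_form patchn_def)

definition cell_mean :: "(real^'n \<Rightarrow> real) \<Rightarrow> (real^'n) set \<Rightarrow> real" where
  "cell_mean f T = Mform E Nd T f (\<lambda>_. 1) / Mform E Nd T (\<lambda>_. 1) (\<lambda>_. 1)"

lemma PiH_eq_cell_means: "PiH E Nd H f = (\<lambda>x. \<Sum>T\<in>cells. cell_mean f T * ind Nd T x)"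
  by (simp add: PiH_def cell_mean_def semi_Mform_sq)

lemma PiH_on_cell:
  assumes "T \<in> cells" "x \<in> Nd" "x \<in> T"
  shows "PiH E Nd H f x = cell_mean f T"
proof -
  have "PiH E Nd H f x = (\<Sum>T'\<in>cells. if T' = T then cell_mean f T' else 0)"
    unfolding PiH_eq_cell_means
  proof (rule sum.cong[OF refl])
    fix T' assume "T' \<in> cells"
    then show "cell_mean f T' * ind Nd T' x = (if T' = T then cell_mean f T' else 0)"
      using disjoint_mesh[OF H_eq N_pos] assms by (auto simp: ind_def disjoint_def)
  qed
  also have "\<dots> = cell_mean f T" using finite_cells assms(1) by simp
  finally show ?thesis .
qed

lemma cell_mean_orthogonal: "Mform E Nd T (\<lambda>x. f x - cell_mean f T) (\<lambda>_. 1) = 0"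
proof (cases "Mform E Nd T (\<lambda>_. 1) (\<lambda>_. 1) = 0")
  case True
  then have "Mform E Nd T h (\<lambda>_. 1) = 0" for h
    using Mform_Cauchy_Schwarz[of T h "\<lambda>_. 1"] by simp
  then show ?thesis .
next
  case False
  have "Mform E Nd T (\<lambda>x. f x - cell_mean f T) (\<lambda>_. 1)
      = Mform E Nd T f (\<lambda>_. 1) - cell_mean f T * Mform E Nd T (\<lambda>_. 1) (\<lambda>_. 1)"
    by (simp add: Mform_diff_left Mform_const_left[of _ _ _ "cell_mean f T"])
  with False show ?thesis by (simp add: cell_mean_def)
qed

lemma PiH_error_on_cell:
  assumes "T \<in> cells"
  shows "Mform E Nd T (\<lambda>x. f x - PiH E Nd H f x) w = Mform E Nd T (\<lambda>x. f x - cell_mean f T) w"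
  by (rule Mform_cong) (simp add: PiH_on_cell[OF assms])

lemma PiH_error_orthogonal: "T \<in> cells \<Longrightarrow> Mform E Nd T (\<lambda>x. f x - PiH E Nd H f x) (\<lambda>_. 1) = 0"
  by (simp only: PiH_error_on_cell cell_mean_orthogonal)

lemma Mform_cell_pythagoras:
  "Mform E Nd T (\<lambda>x. (f x - cell_mean f T) + k * 1) (\<lambda>x. (f x - cell_mean f T) + k * 1)
     = Mform E Nd T (\<lambda>x. f x - cell_mean f T) (\<lambda>x. f x - cell_mean f T) + k\<^sup>2 * Mform E Nd T (\<lambda>_. 1) (\<lambda>_. 1)"
  unfolding Mform_eq_edge_form edge_form_square_expand
  using cell_mean_orthogonal[unfolded Mform_eq_edge_form] by simp

lemma PiH_error_cell_le:
  assumes "T \<in> cells"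
  shows "Mform E Nd T (\<lambda>x. f x - PiH E Nd H f x) (\<lambda>x. f x - PiH E Nd H f x)
    \<le> Mform E Nd T (\<lambda>x. f x - c) (\<lambda>x. f x - c)"
proof -
  let ?h = "\<lambda>x. f x - cell_mean f T"
  have "Mform E Nd T (\<lambda>x. f x - PiH E Nd H f x) (\<lambda>x. f x - PiH E Nd H f x) = Mform E Nd T ?h ?h"
    by (rule Mform_cong) (simp add: PiH_on_cell[OF assms])
  also have "\<dots> \<le> Mform E Nd T ?h ?h + (cell_mean f T - c)\<^sup>2 * Mform E Nd T (\<lambda>_. 1) (\<lambda>_. 1)"
    using Mform_nonneg by simp
  also have "\<dots> = Mform E Nd T (\<lambda>x. f x - c) (\<lambda>x. f x - c)"
    using Mform_cell_pythagoras[of T f "cell_mean f T - c"] by simp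
  finally show ?thesis .
qed

lemma Mform_PiH_cell_le:
  assumes "T \<in> cells"
  shows "Mform E Nd T (PiH E Nd H f) (PiH E Nd H f) \<le> Mform E Nd T f f"
proof -
  have "Mform E Nd T (PiH E Nd H f) (PiH E Nd H f) = Mform E Nd T (\<lambda>_. cell_mean f T) (\<lambda>_. cell_mean f T)"
    by (rule Mform_cong) (simp add: PiH_on_cell[OF assms])
  also have "\<dots> = (cell_mean f T)\<^sup>2 * Mform E Nd T (\<lambda>_. 1) (\<lambda>_. 1)"
    by (simp add: Mform_const_left[of _ _ _ "cell_mean f T"] Mform_const_right[of _ _ _ _ "cell_mean f T"]
        power2_eq_square)
  also have "\<dots> \<le> Mform E Nd T f f"
    using Mform_cell_pythagoras[of T f "cell_mean f T"] Mform_nonneg[of T "\<lambda>x. f x - cell_mean f T"] by simp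
  finally show ?thesis .
qed

lemma Mform_PiH_le: "Mform E Nd UNIV (PiH E Nd H f) (PiH E Nd H f) \<le> Mform E Nd UNIV f f"
  unfolding Mform_eq_sum_cells[of "PiH E Nd H f"] Mform_eq_sum_cells[of f]
  by (rule sum_mono[OF Mform_PiH_cell_le])

text \<open>The Poincar\'e scaling assumption is applied to a representative of f in hatV; only its values
  on the nodes matter.\<close>

lemma PiH_error_cell_le_Lform:
  assumes "T \<in> cells"
  shows "Mform E Nd T (\<lambda>x. f x - PiH E Nd H f x) (\<lambda>x. f x - PiH E Nd H f x)
    \<le> (\<mu> * H)\<^sup>2 * Lform E Nd (patch H T) f f"
proof -
  define f' where "f' x = (if x \<in> Nd then f x else 0)" for x
  have "f' \<in> hatV Nd" by (simp add: hatV_def f'_def)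
  then obtain c where c: "semi (Mform E Nd T) (\<lambda>x. f' x - c) \<le> \<mu> * H * semi (Lform E Nd (patch H T)) f'"
    using poincare assms by blast
  have "Mform E Nd T (\<lambda>x. f x - c) (\<lambda>x. f x - c) = Mform E Nd T (\<lambda>x. f' x - c) (\<lambda>x. f' x - c)"
    by (rule Mform_cong) (simp add: f'_def)
  then have "Mform E Nd T (\<lambda>x. f x - PiH E Nd H f x) (\<lambda>x. f x - PiH E Nd H f x)
      \<le> Mform E Nd T (\<lambda>x. f' x - c) (\<lambda>x. f' x - c)"
    using PiH_error_cell_le[OF assms, of f c] by simp
  also have "\<dots> \<le> (\<mu> * H * semi (Lform E Nd (patch H T)) f')\<^sup>2"
    using power_mono[OF c, of 2] by (simp add: semi_Mform_sq semi_def Mform_nonneg)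
  also have "Lform E Nd (patch H T) f' f' = Lform E Nd (patch H T) f f"
    unfolding Lform_eq_edge_form using edge_in_nodes by (intro edge_form_cong) (auto simp: f'_def)
  then have "(\<mu> * H * semi (Lform E Nd (patch H T)) f')\<^sup>2 = (\<mu> * H)\<^sup>2 * Lform E Nd (patch H T) f f"
    by (simp add: power_mult_distrib semi_Lform_sq)
  finally show ?thesis .
qed

lemma PiH_error_le:
  "semi (Mform E Nd UNIV) (\<lambda>x. f x - PiH E Nd H f x) \<le> \<mu> * H * sqrt (3 ^ CARD('n)) * semi (Lform E Nd UNIV) f"
proof -
  have "Mform E Nd UNIV (\<lambda>x. f x - PiH E Nd H f x) (\<lambda>x. f x - PiH E Nd H f x)
      \<le> (\<Sum>T\<in>cells. (\<mu> * H)\<^sup>2 * Lform E Nd (patch H T) f f)"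
    unfolding Mform_eq_sum_cells by (rule sum_mono[OF PiH_error_cell_le_Lform])
  also have "\<dots> \<le> (\<mu> * H)\<^sup>2 * (3 ^ CARD('n) * Lform E Nd UNIV f f)"
    unfolding sum_distrib_left[symmetric] by (rule mult_left_mono[OF Lform_sum_patch_le]) simp
  finally have "Mform E Nd UNIV (\<lambda>x. f x - PiH E Nd H f x) (\<lambda>x. f x - PiH E Nd H f x)
      \<le> (\<mu> * H * sqrt (3 ^ CARD('n)) * semi (Lform E Nd UNIV) f)\<^sup>2"
    by (simp add: power_mult_distrib semi_Lform_sq)
  then show ?thesis
    using mu_pos H_pos by (simp add: semi_def real_le_lsqrt Lform_nonneg)
qed

text \<open>Since f - \<Pi>_H f is M-orthogonal to constants on each cell, the Poincar\'e constant of z may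
  be subtracted cellwise.\<close>

lemma PiH_error_dual_cell_bound:
  assumes T: "T \<in> cells" and z: "z \<in> hatV Nd"
  shows "\<bar>Mform E Nd T (\<lambda>x. f x - PiH E Nd H f x) z\<bar>
    \<le> \<mu> * H * (sqrt (Mform E Nd T (\<lambda>x. f x - PiH E Nd H f x) (\<lambda>x. f x - PiH E Nd H f x))
        * sqrt (Lform E Nd (patch H T) z z))"
proof -
  let ?e = "\<lambda>x. f x - PiH E Nd H f x"
  obtain c where c: "semi (Mform E Nd T) (\<lambda>x. z x - c) \<le> \<mu> * H * semi (Lform E Nd (patch H T)) z"
    using poincare T z by blast
  have "Mform E Nd T ?e z = Mform E Nd T ?e (\<lambda>x. z x - c)"
    using PiH_error_orthogonal[OF T, of f]
    by (simp add: Mform_diff_right Mform_const_right[of _ _ _ _ c])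
  then have "\<bar>Mform E Nd T ?e z\<bar> \<le> sqrt (Mform E Nd T ?e ?e) * semi (Mform E Nd T) (\<lambda>x. z x - c)"
    using Mform_Cauchy_Schwarz by (simp add: semi_def)
  also have "\<dots> \<le> sqrt (Mform E Nd T ?e ?e) * (\<mu> * H * sqrt (Lform E Nd (patch H T) z z))"
    using c by (intro mult_left_mono) (auto simp: semi_def Mform_nonneg)
  finally show ?thesis by (simp add: mult_ac)
qed

lemma PiH_error_dual_bound:
  assumes z: "z \<in> hatV Nd"
  shows "\<bar>Mform E Nd UNIV (\<lambda>x. f x - PiH E Nd H f x) z\<bar>
     \<le> \<mu> * H * sqrt (3 ^ CARD('n)) * semi (Mform E Nd UNIV) (\<lambda>x. f x - PiH E Nd H f x)
        * semi (Lform E Nd UNIV) z"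
proof -
  let ?e = "\<lambda>x. f x - PiH E Nd H f x"
  have "\<bar>Mform E Nd UNIV ?e z\<bar> \<le> (\<Sum>T\<in>cells. \<bar>Mform E Nd T ?e z\<bar>)"
    unfolding Mform_eq_sum_cells by (rule sum_abs)
  also have "\<dots> \<le> \<mu> * H * (\<Sum>T\<in>cells. sqrt (Mform E Nd T ?e ?e) * sqrt (Lform E Nd (patch H T) z z))"
    unfolding sum_distrib_left by (rule sum_mono[OF PiH_error_dual_cell_bound[OF _ z]])
  also have "\<dots> \<le> \<mu> * H * (sqrt (Mform E Nd UNIV ?e ?e) * sqrt (\<Sum>T\<in>cells. Lform E Nd (patch H T) z z))"
    unfolding Mform_eq_sum_cells[of ?e ?e] using mu_pos H_pos
    by (intro mult_left_mono sum_sqrt_mult_le Mform_nonneg Lform_nonneg) auto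
  also have "\<dots> \<le> \<mu> * H * (sqrt (Mform E Nd UNIV ?e ?e) * (sqrt (3 ^ CARD('n)) * sqrt (Lform E Nd UNIV z z)))"
    using mu_pos H_pos Lform_sum_patch_le
    by (intro mult_left_mono) (auto simp: Mform_nonneg simp flip: real_sqrt_mult)
  finally show ?thesis by (simp add: semi_def mult_ac)
qed

lemma g_in_P0: "T \<in> cells \<Longrightarrow> g T \<in> P0 Nd H (loc T)"
  using slod_basis by (simp add: slod_min_def Let_def)

lemma g_support:
  assumes "T \<in> cells" "g T x \<noteq> 0"
  shows "x \<in> Nd \<and> x \<in> loc T"
proof -
  obtain c where "g T = (\<lambda>x. \<Sum>T'\<in>{T' \<in> cells. T' \<subseteq> loc T}. c T' * ind Nd T' x)"
    using g_in_P0[OF assms(1)] by (auto simp: P0_def)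
  then have "(\<Sum>T'\<in>{T' \<in> cells. T' \<subseteq> loc T}. c T' * ind Nd T' x) \<noteq> 0" using assms(2) by simp
  then obtain T' where "T' \<in> {T' \<in> cells. T' \<subseteq> loc T}" "c T' * ind Nd T' x \<noteq> 0"
    by (meson sum.not_neutral_contains_not_neutral)
  then show ?thesis by (auto simp: ind_def split: if_splits)
qed

lemma g_indicator_coeffs: "\<exists>P. \<forall>T\<in>cells. g T = (\<lambda>x. \<Sum>T'\<in>cells. P T T' * ind Nd T' x)"
proof -
  have "\<exists>p. g T = (\<lambda>x. \<Sum>T'\<in>cells. p T' * ind Nd T' x)" if T: "T \<in> cells" for T
  proof -
    obtain c where c: "g T = (\<lambda>x. \<Sum>T'\<in>{T' \<in> cells. T' \<subseteq> loc T}. c T' * ind Nd T' x)"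
      using g_in_P0[OF T] by (auto simp: P0_def)
    have "(\<Sum>T'\<in>cells. (if T' \<subseteq> loc T then c T' else 0) * ind Nd T' x)
        = (\<Sum>T'\<in>{T' \<in> cells. T' \<subseteq> loc T}. c T' * ind Nd T' x)" for x
      using finite_cells by (simp add: sum.inter_filter if_distrib[of "\<lambda>a. a * ind Nd _ x"] cong: if_cong)
    then show ?thesis unfolding c by (intro exI[of _ "\<lambda>T'. if T' \<subseteq> loc T then c T' else 0"]) simp
  qed
  then have "\<forall>T\<in>cells. \<exists>p. g T = (\<lambda>x. \<Sum>T'\<in>cells. p T' * ind Nd T' x)" by blast
  then show ?thesis by (rule bchoice)
qed

lemma combination_g_eq:
  assumes P: "\<forall>T\<in>cells. g T = (\<lambda>x. \<Sum>T'\<in>cells. P T T' * ind Nd T' x)"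
  shows "(\<lambda>x. \<Sum>T\<in>cells. c T * g T x) = (\<lambda>x. \<Sum>T'\<in>cells. (\<Sum>T\<in>cells. P T T' * c T) * ind Nd T' x)"
proof
  fix x
  have "(\<Sum>T\<in>cells. c T * g T x) = (\<Sum>T\<in>cells. c T * (\<Sum>T'\<in>cells. P T T' * ind Nd T' x))"
    using P by (intro sum.cong refl) simp
  also have "\<dots> = (\<Sum>T\<in>cells. \<Sum>T'\<in>cells. P T T' * c T * ind Nd T' x)"
    by (simp add: sum_distrib_left mult_ac)
  also have "\<dots> = (\<Sum>T'\<in>cells. (\<Sum>T\<in>cells. P T T' * c T) * ind Nd T' x)"
    by (subst sum.swap) (simp add: sum_distrib_right)
  finally show "(\<Sum>T\<in>cells. c T * g T x) = (\<Sum>T'\<in>cells. (\<Sum>T\<in>cells. P T T' * c T) * ind Nd T' x)" .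
qed

lemma Cr_pos: "Cr > 0"
  using riesz by (simp add: riesz_assm_def)

lemma riesz_lower:
  "(\<Sum>T\<in>cells. (c T)\<^sup>2) \<le> Cr * Mform E Nd UNIV (\<lambda>x. \<Sum>T\<in>cells. c T * g T x) (\<lambda>x. \<Sum>T\<in>cells. c T * g T x)"
  using riesz Cr_pos by (simp add: riesz_assm_def semi_Mform_sq field_simps)

text \<open>By the lower Riesz bound the g_T are independent; as there are as many of them as cells, they span
  the piecewise constants, and the same bound controls the coefficients of \<Pi>_H f.\<close>

lemma PiH_in_span_g:
  "\<exists>c. (\<lambda>x. \<Sum>T\<in>cells. c T * g T x) = PiH E Nd H f \<and> (\<Sum>T\<in>cells. (c T)\<^sup>2) \<le> Cr * Mform E Nd UNIV f f"
proof -
  obtain P where P: "\<forall>T\<in>cells. g T = (\<lambda>x. \<Sum>T'\<in>cells. P T T' * ind Nd T' x)"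
    using g_indicator_coeffs by blast
  have kernel: "\<forall>c. (\<forall>T'\<in>cells. (\<Sum>T\<in>cells. P T T' * c T) = 0) \<longrightarrow> (\<forall>T\<in>cells. c T = 0)"
  proof (intro allI impI)
    fix c assume "\<forall>T'\<in>cells. (\<Sum>T\<in>cells. P T T' * c T) = 0"
    then have "(\<lambda>x. \<Sum>T\<in>cells. c T * g T x) = (\<lambda>x. 0)" by (simp add: combination_g_eq[OF P])
    then have "(\<Sum>T\<in>cells. (c T)\<^sup>2) \<le> 0" using riesz_lower[of c] by (simp add: Mform_def)
    then show "\<forall>T\<in>cells. c T = 0"
      using sum_nonneg_eq_0_iff[OF finite_cells, of "\<lambda>T. (c T)\<^sup>2"] by (simp add: antisym sum_nonneg)
  qed
  obtain c where c: "\<forall>T'\<in>cells. (\<Sum>T\<in>cells. P T T' * c T) = cell_mean f T'"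
    using square_system_solvable[OF finite_cells finite_cells refl kernel, of "cell_mean f"] by blast
  have span: "(\<lambda>x. \<Sum>T\<in>cells. c T * g T x) = PiH E Nd H f"
    unfolding combination_g_eq[OF P] PiH_eq_cell_means using c by simp
  have "(\<Sum>T\<in>cells. (c T)\<^sup>2) \<le> Cr * Mform E Nd UNIV (PiH E Nd H f) (PiH E Nd H f)"
    using riesz_lower[of c] span by simp
  also have "\<dots> \<le> Cr * Mform E Nd UNIV f f" using Cr_pos Mform_PiH_le by (simp add: mult_left_mono)
  finally show ?thesis using span by blast
qed

lemma phi_in_Vsp: "phi T \<in> Vsp Nd \<Gamma>"
  and phi_support: "phi T x \<noteq> 0 \<Longrightarrow> x \<in> Nd \<inter> loc T"
  using Kinv_loc_solves[of "loc T" "g T"]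
  by (auto simp: Vloc_eq_supported_on Vsp_eq_supported_on supported_on_def)

lemma combination_phi_in_Vsp: "(\<lambda>x. \<Sum>T\<in>cells. c T * phi T x) \<in> Vsp Nd \<Gamma>"
  using phi_in_Vsp by (auto simp: Vsp_eq_supported_on supported_on_def intro!: sum.neutral)

text \<open>The defect of \<phi>_T in the global equation is the functional B_\<omega> \<phi>_T; it only sees v near
  \<omega> = N^l(T), where it is represented by R g_T.\<close>

lemma residual_local_bound:
  assumes T: "T \<in> cells" and v: "v \<in> Vsp Nd \<Gamma>"
  shows "\<bar>Kform \<gamma> E Nd UNIV (phi T) v - Mform E Nd UNIV (g T) v\<bar>
    \<le> Vnorm E Nd (loc T) (corr T) * Vnorm E Nd (loc T) v"
proof -
  let ?w = "\<lambda>x. if x \<in> nbhd E Nd (loc T) then v x else 0"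
  have "Vform E Nd (loc T) (corr T) ?w = Kform \<gamma> E Nd UNIV (phi T) ?w - Mform E Nd UNIV (g T) ?w"
    by (rule Rop_solves[THEN conjunct2, rule_format, OF cutoff_in_Vtilde[OF v]])
  also have "Kform \<gamma> E Nd UNIV (phi T) ?w = Kform \<gamma> E Nd UNIV (phi T) v"
    by (rule Kform_cutoff_right[OF phi_support])
  also have "Mform E Nd UNIV (g T) ?w = Mform E Nd UNIV (g T) v"
    by (rule Mform_cong_support) (use g_support[OF T] in \<open>auto simp: nbhd_def\<close>)
  finally have "\<bar>Kform \<gamma> E Nd UNIV (phi T) v - Mform E Nd UNIV (g T) v\<bar> = \<bar>Vform E Nd (loc T) (corr T) ?w\<bar>"
    by simp
  also have "\<dots> \<le> sqrt (Vform E Nd (loc T) (corr T) (corr T)) * sqrt (Vform E Nd (loc T) ?w ?w)"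
    by (rule edge_form_Cauchy_Schwarz[OF nonneg_weights_V])
  finally show ?thesis by (simp add: Vform_cutoff Vnorm_eq)
qed

lemma sigma_ge: "T \<in> cells \<Longrightarrow> Vnorm E Nd (loc T) (corr T) \<le> sigma \<gamma> E Nd \<Gamma> H l g"
  unfolding sigma_def using finite_cells by (intro Max_ge) auto

lemma sigma_nonneg: "0 \<le> sigma \<gamma> E Nd \<Gamma> H l g"
proof -
  obtain x where "x \<in> Nd" using boundary_node by blast
  then obtain T where "T \<in> cells"
    using Omega_subset_mesh[OF H_eq N_pos] nodes_in_Omega by blast
  then show ?thesis using sigma_ge[of T] Vnorm_nonneg by (meson order_trans)
qed

lemma residual_sum_bound:
  assumes z: "z \<in> Vsp Nd \<Gamma>"
  shows "\<bar>\<Sum>T\<in>cells. c T * (Kform \<gamma> E Nd UNIV (phi T) z - Mform E Nd UNIV (g T) z)\<bar>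
    \<le> sigma \<gamma> E Nd \<Gamma> H l g * sqrt (\<Sum>T\<in>cells. (c T)\<^sup>2)
       * sqrt (real ((2 * l + 1) ^ CARD('n)) * Vform E Nd UNIV z z)"
proof -
  let ?\<sigma> = "sigma \<gamma> E Nd \<Gamma> H l g"
  have cell_term: "\<bar>c T * (Kform \<gamma> E Nd UNIV (phi T) z - Mform E Nd UNIV (g T) z)\<bar>
      \<le> ?\<sigma> * (\<bar>c T\<bar> * Vnorm E Nd (loc T) z)" if T: "T \<in> cells" for T
  proof -
    have "\<bar>Kform \<gamma> E Nd UNIV (phi T) z - Mform E Nd UNIV (g T) z\<bar> \<le> ?\<sigma> * Vnorm E Nd (loc T) z"
      using residual_local_bound[OF T z] sigma_ge[OF T]
      by (rule order_trans[OF _ mult_right_mono]) (simp add: Vnorm_eq Vform_nonneg)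
    then show ?thesis by (simp add: abs_mult mult_left_mono mult.left_commute)
  qed
  have "\<bar>\<Sum>T\<in>cells. c T * (Kform \<gamma> E Nd UNIV (phi T) z - Mform E Nd UNIV (g T) z)\<bar>
      \<le> ?\<sigma> * (\<Sum>T\<in>cells. \<bar>c T\<bar> * Vnorm E Nd (loc T) z)"
    unfolding sum_distrib_left by (rule order_trans[OF sum_abs sum_mono[OF cell_term]])
  also have "\<dots> \<le> ?\<sigma> * (sqrt (\<Sum>T\<in>cells. (c T)\<^sup>2) * sqrt (\<Sum>T\<in>cells. Vform E Nd (loc T) z z))"
    using L2_set_mult_ineq[of c "\<lambda>T. Vnorm E Nd (loc T) z" cells] sigma_nonneg
    by (intro mult_left_mono) (simp_all add: L2_set_def abs_of_nonneg[OF Vnorm_nonneg] Vnorm_eq Vform_nonneg)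
  also have "(\<Sum>T\<in>cells. Vform E Nd (loc T) z z) \<le> real ((2 * l + 1) ^ CARD('n)) * Vform E Nd UNIV z z"
    using edge_form_sum_overlap_le[OF nonneg_weights_V finite_cells finite_nodes, of loc]
      card_patchn_containing_node by blast
  then have "?\<sigma> * (sqrt (\<Sum>T\<in>cells. (c T)\<^sup>2) * sqrt (\<Sum>T\<in>cells. Vform E Nd (loc T) z z))
      \<le> ?\<sigma> * (sqrt (\<Sum>T\<in>cells. (c T)\<^sup>2) * sqrt (real ((2 * l + 1) ^ CARD('n)) * Vform E Nd UNIV z z))"
    using sigma_nonneg by (intro mult_left_mono) (auto intro: sum_nonneg)
  finally show ?thesis by (simp add: mult_ac)
qed

lemma VHl_subset_Vsp: "VHl \<gamma> E Nd \<Gamma> H l g \<subseteq> Vsp Nd \<Gamma>"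
  using combination_phi_in_Vsp by (auto simp: VHl_def)

lemma VHl_diff:
  assumes "v \<in> VHl \<gamma> E Nd \<Gamma> H l g" "w \<in> VHl \<gamma> E Nd \<Gamma> H l g"
  shows "(\<lambda>x. v x - w x) \<in> VHl \<gamma> E Nd \<Gamma> H l g"
proof -
  obtain a b where "v = (\<lambda>x. \<Sum>T\<in>cells. a T * phi T x)" "w = (\<lambda>x. \<Sum>T\<in>cells. b T * phi T x)"
    using assms by (auto simp: VHl_def)
  then have "(\<lambda>x. v x - w x) = (\<lambda>x. \<Sum>T\<in>cells. (a T - b T) * phi T x)"
    by (simp add: left_diff_distrib sum_subtractf)
  then show ?thesis by (auto simp: VHl_def)
qed

lemma Kform_diff_left:
  "Kform \<gamma> E Nd \<omega> (\<lambda>x. v x - w x) u = Kform \<gamma> E Nd \<omega> v u - Kform \<gamma> E Nd \<omega> w u"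
  unfolding Kform_eq_edge_form by (rule edge_form_diff_left)

lemma Kform_interpolant_residual:
  assumes span: "(\<lambda>x. \<Sum>T\<in>cells. c T * g T x) = PiH E Nd H f" and z: "z \<in> Vsp Nd \<Gamma>"
  shows "Kform \<gamma> E Nd UNIV (\<lambda>x. Kinv \<gamma> E Nd \<Gamma> f x - (\<Sum>T\<in>cells. c T * phi T x)) z
    = Mform E Nd UNIV (\<lambda>x. f x - PiH E Nd H f x) z
      - (\<Sum>T\<in>cells. c T * (Kform \<gamma> E Nd UNIV (phi T) z - Mform E Nd UNIV (g T) z))"
proof -
  have "Kform \<gamma> E Nd UNIV (Kinv \<gamma> E Nd \<Gamma> f) z = Mform E Nd UNIV f z"
    using Kinv_solves z by blast
  moreover have "Kform \<gamma> E Nd UNIV (\<lambda>x. \<Sum>T\<in>cells. c T * phi T x) z = (\<Sum>T\<in>cells. c T * Kform \<gamma> E Nd UNIV (phi T) z)"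
    unfolding Kform_eq_edge_form by (rule edge_form_sum_left)
  moreover have "Mform E Nd UNIV (PiH E Nd H f) z = (\<Sum>T\<in>cells. c T * Mform E Nd UNIV (g T) z)"
    unfolding span[symmetric] Mform_eq_edge_form by (rule edge_form_sum_left)
  ultimately show ?thesis
    by (simp add: Kform_diff_left Mform_diff_left right_diff_distrib sum_subtractf)
qed

lemma Vform_le_Lform:
  assumes "v \<in> Vsp Nd \<Gamma>"
  shows "Vform E Nd UNIV v v \<le> (Cfr\<^sup>2 + 1) * Lform E Nd UNIV v v"
proof -
  have "Mform E Nd UNIV v v \<le> Cfr\<^sup>2 * Lform E Nd UNIV v v"
    using power_mono[OF friedrichs[rule_format, OF assms], of 2]
    by (simp add: semi_Mform_sq power_mult_distrib semi_Lform_sq semi_Mform_nonneg)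
  then show ?thesis using Mform_plus_Lform[of E Nd UNIV v v] by (simp add: algebra_simps)
qed

lemma interpolant_error_bound:
  assumes span: "(\<lambda>x. \<Sum>T\<in>cells. c T * g T x) = PiH E Nd H f"
    and coeffs: "(\<Sum>T\<in>cells. (c T)\<^sup>2) \<le> Cr * Mform E Nd UNIV f f"
  shows "semi (Lform E Nd UNIV) (\<lambda>x. Kinv \<gamma> E Nd \<Gamma> f x - (\<Sum>T\<in>cells. c T * phi T x))
    \<le> (\<mu> * H * sqrt (3 ^ CARD('n)) * semi (Mform E Nd UNIV) (\<lambda>x. f x - PiH E Nd H f x)
       + sigma \<gamma> E Nd \<Gamma> H l g * sqrt Cr * semi (Mform E Nd UNIV) f
         * sqrt (real ((2 * l + 1) ^ CARD('n)) * (Cfr\<^sup>2 + 1))) / \<alpha>"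
    (is "semi _ ?w \<le> (?P + ?R) / \<alpha>")
proof -
  have w: "?w \<in> Vsp Nd \<Gamma>"
    using Kinv_solves combination_phi_in_Vsp by (auto simp: Vsp_eq_supported_on supported_on_def)
  let ?nw = "semi (Lform E Nd UNIV) ?w"
  have P: "\<bar>Mform E Nd UNIV (\<lambda>x. f x - PiH E Nd H f x) ?w\<bar> \<le> ?P * ?nw"
    using PiH_error_dual_bound w by (simp add: Vsp_def)
  have "\<bar>\<Sum>T\<in>cells. c T * (Kform \<gamma> E Nd UNIV (phi T) ?w - Mform E Nd UNIV (g T) ?w)\<bar>
      \<le> sigma \<gamma> E Nd \<Gamma> H l g * sqrt (Cr * Mform E Nd UNIV f f)
         * sqrt (real ((2 * l + 1) ^ CARD('n)) * ((Cfr\<^sup>2 + 1) * Lform E Nd UNIV ?w ?w))"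
  proof (rule order_trans[OF residual_sum_bound[OF w]])
    have "sqrt (real ((2 * l + 1) ^ CARD('n)) * Vform E Nd UNIV ?w ?w)
        \<le> sqrt (real ((2 * l + 1) ^ CARD('n)) * ((Cfr\<^sup>2 + 1) * Lform E Nd UNIV ?w ?w))"
      using Vform_le_Lform[OF w] by (intro real_sqrt_le_mono mult_left_mono) simp_all
    then show "sigma \<gamma> E Nd \<Gamma> H l g * sqrt (\<Sum>T\<in>cells. (c T)\<^sup>2)
        * sqrt (real ((2 * l + 1) ^ CARD('n)) * Vform E Nd UNIV ?w ?w)
      \<le> sigma \<gamma> E Nd \<Gamma> H l g * sqrt (Cr * Mform E Nd UNIV f f)
        * sqrt (real ((2 * l + 1) ^ CARD('n)) * ((Cfr\<^sup>2 + 1) * Lform E Nd UNIV ?w ?w))"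
      using coeffs sigma_nonneg
      by (intro mult_mono mult_left_mono real_sqrt_le_mono)
        (simp_all add: sum_nonneg Vform_nonneg Mform_nonneg Cr_pos less_imp_le)
  qed
  also have "\<dots> = ?R * ?nw"
    by (simp add: semi_def real_sqrt_mult Cr_pos less_imp_le mult_ac)
  finally have R: "\<bar>\<Sum>T\<in>cells. c T * (Kform \<gamma> E Nd UNIV (phi T) ?w - Mform E Nd UNIV (g T) ?w)\<bar> \<le> ?R * ?nw" .
  have "\<alpha> * Lform E Nd UNIV ?w ?w \<le> Kform \<gamma> E Nd UNIV ?w ?w" by (rule Kform_ge_Lform)
  also have "\<dots> \<le> (?P + ?R) * sqrt (Lform E Nd UNIV ?w ?w)"
    using P R by (simp add: Kform_interpolant_residual[OF span w] semi_def algebra_simps)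
  finally show ?thesis
    unfolding semi_def using mu_pos H_pos sigma_nonneg alpha_pos
    by (intro sqrt_le_if_mult_le_mult_sqrt Lform_nonneg add_nonneg_nonneg mult_nonneg_nonneg)
      (auto simp: semi_def Mform_nonneg Cr_pos less_imp_le)
qed

text \<open>C\'ea's lemma in the energy of K, converted to the L-seminorm.\<close>

lemma galerkin_quasi_optimal:
  assumes uh: "uh \<in> VHl \<gamma> E Nd \<Gamma> H l g"
    and galerkin: "\<forall>v\<in>VHl \<gamma> E Nd \<Gamma> H l g. Kform \<gamma> E Nd UNIV uh v = Mform E Nd UNIV f v"
    and v: "v \<in> VHl \<gamma> E Nd \<Gamma> H l g"
  shows "semi (Lform E Nd UNIV) (\<lambda>x. Kinv \<gamma> E Nd \<Gamma> f x - uh x)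
    \<le> sqrt (\<beta> / \<alpha>) * semi (Lform E Nd UNIV) (\<lambda>x. Kinv \<gamma> E Nd \<Gamma> f x - v x)"
proof -
  let ?u = "Kinv \<gamma> E Nd \<Gamma> f"
  let ?e = "\<lambda>x. ?u x - uh x" and ?w = "\<lambda>x. ?u x - v x" and ?d = "\<lambda>x. v x - uh x"
  let ?K = "Kform \<gamma> E Nd UNIV"
  have d: "?d \<in> VHl \<gamma> E Nd \<Gamma> H l g" by (rule VHl_diff[OF v uh])
  then have "?K ?u ?d = ?K uh ?d"
    using Kinv_solves galerkin VHl_subset_Vsp by auto
  then have orth: "?K ?e ?d = 0" by (simp add: Kform_diff_left)
  have "?K ?e ?e = ?K ?e ?w + ?K ?e ?d"
    unfolding Kform_eq_edge_form by (subst edge_form_add_right[symmetric]) simp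
  also have "\<dots> \<le> sqrt (?K ?e ?e) * sqrt (?K ?w ?w)"
    using orth edge_form_Cauchy_Schwarz[OF nonneg_weights_K, of Nd UNIV ?e ?w]
    by (simp add: Kform_eq_edge_form)
  finally have "sqrt (?K ?e ?e) \<le> sqrt (?K ?w ?w) / 1"
    by (intro sqrt_le_if_mult_le_mult_sqrt Kform_nonneg real_sqrt_ge_zero) (simp_all add: mult.commute)
  then have "?K ?e ?e \<le> ?K ?w ?w" by simp
  then have "\<alpha> * Lform E Nd UNIV ?e ?e \<le> \<beta> * Lform E Nd UNIV ?w ?w"
    using Kform_ge_Lform[of UNIV ?e] Kform_le_Lform[of UNIV ?w] by linarith
  then have "Lform E Nd UNIV ?e ?e \<le> \<beta> / \<alpha> * Lform E Nd UNIV ?w ?w"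
    using alpha_pos by (simp add: field_simps)
  then show ?thesis by (simp add: semi_def real_sqrt_mult[symmetric])
qed

lemma interpolant_bound_le:
  "\<mu> * H * sqrt (3 ^ CARD('n)) * semi (Mform E Nd UNIV) (\<lambda>x. f x - PiH E Nd H f x)
   + sigma \<gamma> E Nd \<Gamma> H l g * sqrt Cr * semi (Mform E Nd UNIV) f
     * sqrt (real ((2 * l + 1) ^ CARD('n)) * (Cfr\<^sup>2 + 1))
   \<le> sqrt (3 ^ CARD('n)) * (\<mu> + sqrt (Cfr\<^sup>2 + 1)) * (H * semi (Mform E Nd UNIV) (\<lambda>x. f x - PiH E Nd H f x)
   + sqrt Cr * real l powr (real CARD('n) / 2) * sigma \<gamma> E Nd \<Gamma> H l g * semi (Mform E Nd UNIV) f)"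
  (is "\<mu> * H * ?s3 * ?A + ?Y * _ \<le> ?s3 * (\<mu> + ?sF) * (H * ?A + ?X)")
proof -
  have Y: "0 \<le> ?Y" using sigma_nonneg Cr_pos semi_Mform_nonneg by simp
  have "?Y * sqrt (real ((2 * l + 1) ^ CARD('n)) * (Cfr\<^sup>2 + 1))
      \<le> ?Y * (?s3 * real l powr (real CARD('n) / 2) * ?sF)"
    using sqrt_overlap_count_le[OF l_pos] Y by (simp add: real_sqrt_mult mult_left_mono mult_right_mono)
  also have "\<dots> = ?s3 * ?sF * ?X" by (simp add: mult_ac)
  finally have "\<mu> * H * ?s3 * ?A + ?Y * sqrt (real ((2 * l + 1) ^ CARD('n)) * (Cfr\<^sup>2 + 1))
      \<le> ?s3 * \<mu> * (H * ?A) + ?s3 * ?sF * ?X" by (simp add: mult_ac)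
  moreover have "0 \<le> ?X" using sigma_nonneg Cr_pos semi_Mform_nonneg by simp
  then have "0 \<le> ?s3 * \<mu> * ?X" "0 \<le> ?s3 * ?sF * (H * ?A)"
    using H_pos mu_pos semi_Mform_nonneg by simp_all
  ultimately show ?thesis by (simp add: algebra_simps)
qed

theorem slod_error_estimate:
  assumes uh: "uh \<in> VHl \<gamma> E Nd \<Gamma> H l g"
    and galerkin: "\<forall>v\<in>VHl \<gamma> E Nd \<Gamma> H l g. Kform \<gamma> E Nd UNIV uh v = Mform E Nd UNIV f v"
  shows "semi (Lform E Nd UNIV) (\<lambda>x. Kinv \<gamma> E Nd \<Gamma> f x - uh x)
    \<le> slod_constant \<alpha> \<beta> \<mu> Cfr CARD('n) * (H * semi (Mform E Nd UNIV) (\<lambda>x. f x - PiH E Nd H f x)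
       + sqrt Cr * real l powr (real CARD('n) / 2) * sigma \<gamma> E Nd \<Gamma> H l g * semi (Mform E Nd UNIV) f)"
proof -
  let ?A = "semi (Mform E Nd UNIV) (\<lambda>x. f x - PiH E Nd H f x)"
  let ?Y = "sigma \<gamma> E Nd \<Gamma> H l g * sqrt Cr * semi (Mform E Nd UNIV) f"
  let ?X = "sqrt Cr * real l powr (real CARD('n) / 2) * sigma \<gamma> E Nd \<Gamma> H l g * semi (Mform E Nd UNIV) f"
  let ?s3 = "sqrt (3 ^ CARD('n))" and ?sF = "sqrt (Cfr\<^sup>2 + 1)"
  obtain c where span: "(\<lambda>x. \<Sum>T\<in>cells. c T * g T x) = PiH E Nd H f"
    and coeffs: "(\<Sum>T\<in>cells. (c T)\<^sup>2) \<le> Cr * Mform E Nd UNIV f f"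
    using PiH_in_span_g by blast
  have "(\<lambda>x. \<Sum>T\<in>cells. c T * phi T x) \<in> VHl \<gamma> E Nd \<Gamma> H l g" by (auto simp: VHl_def)
  from galerkin_quasi_optimal[OF uh galerkin this]
  have "semi (Lform E Nd UNIV) (\<lambda>x. Kinv \<gamma> E Nd \<Gamma> f x - uh x)
      \<le> sqrt (\<beta> / \<alpha>) * ((\<mu> * H * ?s3 * ?A + ?Y * sqrt (real ((2 * l + 1) ^ CARD('n)) * (Cfr\<^sup>2 + 1))) / \<alpha>)"
    by (rule order_trans[OF _ mult_left_mono[OF interpolant_error_bound[OF span coeffs]]])
      (use alpha_pos beta_pos in simp)
  also have "\<dots> \<le> sqrt (\<beta> / \<alpha>) * (?s3 * (\<mu> + ?sF) * (H * ?A + ?X) / \<alpha>)"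
    using interpolant_bound_le alpha_pos beta_pos by (intro mult_left_mono divide_right_mono) simp_all
  also have "\<dots> = slod_constant \<alpha> \<beta> \<mu> Cfr CARD('n) * (H * ?A + ?X)"
    by (simp add: slod_constant_def)
  finally show ?thesis .
qed

lemma projection_term_le:
  assumes C: "0 \<le> C" and X: "0 \<le> X"
  shows "C * (H * semi (Mform E Nd UNIV) (\<lambda>x. f x - PiH E Nd H f x) + X)
    \<le> C * (1 + \<mu> * sqrt (3 ^ CARD('n))) * (H\<^sup>2 * semi (Lform E Nd UNIV) f + X)"
proof -
  let ?m = "\<mu> * sqrt (3 ^ CARD('n))" and ?b = "H\<^sup>2 * semi (Lform E Nd UNIV) f"
  have "H * semi (Mform E Nd UNIV) (\<lambda>x. f x - PiH E Nd H f x) \<le> ?m * ?b"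
    using mult_left_mono[OF PiH_error_le[of f], of H] H_pos by (simp add: power2_eq_square mult_ac)
  moreover have "?m * ?b + X \<le> (1 + ?m) * (?b + X)"
    using mu_pos X by (simp add: algebra_simps semi_def Lform_nonneg)
  ultimately show ?thesis
    using C by (simp add: mult.assoc mult_left_mono)
qed

end

lemma slod_error_bound:
  fixes Nd :: "(real^'n) set"
  assumes "0 < \<alpha>" "0 < \<mu>"
    and "network Nd E" "Nd \<inter> \<Gamma> \<noteq> {}"
    and "\<forall>x y. E x y \<longrightarrow> \<gamma> x y = \<gamma> y x \<and> \<alpha> \<le> \<gamma> x y \<and> \<gamma> x y \<le> \<beta>"
    and "\<forall>H'\<in>Hs. \<exists>N::nat. N \<ge> 1 \<and> H' = 1 / real N" "H \<in> Hs" "l \<ge> 1"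
    and "poincare_assm Nd E Hs \<mu>"
    and "\<forall>v\<in>Vsp Nd \<Gamma>. semi (Mform E Nd UNIV) v \<le> Cfr * semi (Lform E Nd UNIV) v"
    and "\<forall>T\<in>mesh H. slod_min \<gamma> E Nd \<Gamma> H l T (g T)" "riesz_assm E Nd H Cr g"
    and "uh \<in> VHl \<gamma> E Nd \<Gamma> H l g"
    and "\<forall>v\<in>VHl \<gamma> E Nd \<Gamma> H l g. Kform \<gamma> E Nd UNIV uh v = Mform E Nd UNIV f v"
  defines "C \<equiv> slod_constant \<alpha> \<beta> \<mu> Cfr CARD('n)"
    and "X \<equiv> sqrt Cr * real l powr (real CARD('n) / 2) * sigma \<gamma> E Nd \<Gamma> H l g * semi (Mform E Nd UNIV) f"
  shows "semi (Lform E Nd UNIV) (\<lambda>x. Kinv \<gamma> E Nd \<Gamma> f x - uh x)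
      \<le> C * (H * semi (Mform E Nd UNIV) (\<lambda>x. f x - PiH E Nd H f x) + X)
    \<and> C * (H * semi (Mform E Nd UNIV) (\<lambda>x. f x - PiH E Nd H f x) + X)
      \<le> C * (1 + \<mu> * sqrt (3 ^ CARD('n))) * (H\<^sup>2 * semi (Lform E Nd UNIV) f + X)"
proof -
  obtain N :: nat where N: "N \<ge> 1" "H = 1 / real N" using assms(6,7) by blast
  have "\<forall>T\<in>mesh H. \<forall>v\<in>hatV Nd. \<exists>c. semi (Mform E Nd T) (\<lambda>x. v x - c) \<le> \<mu> * H * semi (Lform E Nd (patch H T)) v"
    using assms(7,9) by (simp add: poincare_assm_def)
  then interpret slod_setting Nd E \<Gamma> \<gamma> \<alpha> \<beta> \<mu> Cfr H N l Cr g
    using assms(1-5,8,10-12) N(1) N(2)[symmetric] by unfold_locales (auto simp: network_def)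
  have X: "0 \<le> X" using sigma_nonneg Cr_pos semi_Mform_nonneg by (simp add: X_def)
  have C: "0 \<le> C" using slod_constant_pos[OF assms(1) beta_pos assms(2)] by (simp add: C_def less_imp_le)
  show ?thesis
    using slod_error_estimate[OF assms(13,14)] projection_term_le[OF C X] unfolding C_def X_def by blast
qed

theorem mainTheorem9:
  fixes \<alpha> \<beta> \<mu> Cfr :: real
  assumes "0 < \<alpha>" "\<alpha> \<le> \<beta>" "0 < \<mu>" "0 < Cfr"
  shows "\<exists>C C'. C > 0 \<and> C' > 0 \<and>
    (\<forall>(Nd :: (real^'n) set) E \<Gamma> \<gamma> Hs H l Cr g f uh.
      network Nd E \<and> \<Gamma> \<subseteq> frontier Omega \<and> Nd \<inter> \<Gamma> \<noteq> {}
      \<and> (\<forall>x y. E x y \<longrightarrow> \<gamma> x y = \<gamma> y x \<and> \<alpha> \<le> \<gamma> x y \<and> \<gamma> x y \<le> \<beta>)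
      \<and> finite Hs \<and> (\<forall>H'\<in>Hs. \<exists>N::nat. N \<ge> 1 \<and> H' = 1 / real N) \<and> H \<in> Hs \<and> l \<ge> 1
      \<and> connectivity_assm Nd E Hs \<and> poincare_assm Nd E Hs \<mu>
      \<and> (\<forall>v\<in>Vsp Nd \<Gamma>. semi (Mform E Nd UNIV) v \<le> Cfr * semi (Lform E Nd UNIV) v)
      \<and> (\<forall>T\<in>mesh H. slod_min \<gamma> E Nd \<Gamma> H l T (g T))
      \<and> riesz_assm E Nd H Cr g
      \<and> uh \<in> VHl \<gamma> E Nd \<Gamma> H l g
      \<and> (\<forall>v\<in>VHl \<gamma> E Nd \<Gamma> H l g. Kform \<gamma> E Nd UNIV uh v = Mform E Nd UNIV f v)
      \<longrightarrow>
      (let u = Kinv \<gamma> E Nd \<Gamma> f;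
           \<sigma> = sigma \<gamma> E Nd \<Gamma> H l g;
           d = real CARD('n);
           nM = semi (Mform E Nd UNIV);
           nL = semi (Lform E Nd UNIV)
       in nL (\<lambda>x. u x - uh x)
            \<le> C * (H * nM (\<lambda>x. f x - PiH E Nd H f x) + sqrt Cr * real l powr (d / 2) * \<sigma> * nM f)
        \<and> C * (H * nM (\<lambda>x. f x - PiH E Nd H f x) + sqrt Cr * real l powr (d / 2) * \<sigma> * nM f)
            \<le> C' * (H^2 * nL f + sqrt Cr * real l powr (d / 2) * \<sigma> * nM f)))"
proof -
  let ?C = "slod_constant \<alpha> \<beta> \<mu> Cfr CARD('n)"
  have C: "0 < ?C" using slod_constant_pos assms(1-3) by force
  then have C': "0 < ?C * (1 + \<mu> * sqrt (3 ^ CARD('n)))" using assms(3) by (simp add: add_pos_nonneg)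
  show ?thesis
    unfolding Let_def
    by (intro exI[of _ ?C] exI[of _ "?C * (1 + \<mu> * sqrt (3 ^ CARD('n)))"] conjI[OF C conjI[OF C']] allI impI,
        elim conjE)
      (rule slod_error_bound[OF assms(1,3)]; assumption)
qed

end
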